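(* Let $n\ge1$ and let $\Pi\subseteq\mathfrak{D}_n$ be invariant under the CMFS-action, i.e. $\tau^c_S(\sigma)\in\Pi$ for all $\sigma\in\Pi$ and all $S\subseteq[n]$. Let $A^{(\mathsf{cyc},\mathsf{exc})}(\Pi;w,t)=\sum_{\sigma\in\Pi}w^{\mathsf{cyc}\,\sigma}t^{\mathsf{exc}\,\sigma}$. Then $$A^{(\mathsf{cyc},\mathsf{exc})}(\Pi;w,t)=\left(\frac{1+xt}{1+x}\right)^{n}P^{(\mathsf{cyc},\mathsf{cpk},\mathsf{exc})}\left(\Pi;w,\frac{(1+x)^{2}t}{(x+t)(1+xt)},\frac{x+t}{1+xt}\right),$$ equivalently, $$P^{(\mathsf{cyc},\mathsf{cpk},\mathsf{exc})}(\Pi;w,x,t)=\left(\frac{1+u}{1+uv}\right)^{n}A^{(\mathsf{cyc},\mathsf{exc})}(\Pi;w,v),$$ where $u=\frac{1+t^{2}-2xt-(1-t)\sqrt{(1+t)^{2}-4xt}}{2(1-x)t}$ and $v=\frac{(1+t)^{2}-2xt-(1+t)\sqrt{(1+t)^{2}-4xt}}{2xt}$.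
   Context: $\mathfrak{D}_n$ is the set of derangements of $[n]$. $P^{(\mathsf{stat}_1,\ldots,\mathsf{stat}_m)}(\Omega;t_1,\ldots,t_m)=\sum_{\sigma\in\Omega}\prod_jt_j^{\mathsf{stat}_j\sigma}$; $\mathsf{cyc}$ = number of cycles, $\mathsf{exc}\,\sigma=\#\{i:\sigma(i)>i\}$, $\mathsf{cpk}\,\sigma=\#\{x:\sigma^{-1}(x)<x>\sigma(x)\}$. Modified Foata–Strehl action: for a word $\rho$ of a permutation of $[n]$ with convention $\rho(0)=0,\rho(n+1)=\infty$ and $x\in[n]$, write $\rho=w_1w_2xw_3w_4$ where $w_2$ (resp. $w_3$) is the maximal contiguous factor immediately left (resp. right) of $x$ all of whose letters are smaller than $x$; $\varphi_x(\rho)=w_1w_3xw_2w_4$; $\varphi'_x(\rho)=\rho$ if $x$ is a peak of $\rho$ (i.e. its neighbors, with the convention, are both smaller) and $\varphi'_x(\rho)=\varphi_x(\rho)$ otherwise. For $\sigma\in\mathfrak{S}_n$, write each cycle starting with its largest element, order the cycles increasingly by their largest elements, and erase parentheses to get the word $\iota(\sigma)$ ($\iota$ is a bijection of $\mathfrak{S}_n$). For $\sigma\in\mathfrak{D}_n$, $\tau^c_x(\sigma)=\iota^{-1}(\varphi'_x(\iota(\sigma)))$, and for $S\subseteq[n]$, $\tau^c_S=\prod_{x\in S}\tau^c_x$ (these commuting involutions of $\mathfrak{D}_n$ define the CMFS-action of $\mathbb{Z}_2^n$). *)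

theory Defs
  imports "HOL-Analysis.Analysis" "HOL-Combinatorics.Permutations"
begin

definition derangements :: "nat \<Rightarrow> (nat \<Rightarrow> nat) set" where
  "derangements n = {\<sigma>. \<sigma> permutes {1..n} \<and> (\<forall>i\<in>{1..n}. \<sigma> i \<noteq> i)}"

definition orbit_of :: "(nat \<Rightarrow> nat) \<Rightarrow> nat \<Rightarrow> nat set" where
  "orbit_of \<sigma> i = {(\<sigma> ^^ k) i | k. True}"

definition cyc :: "nat \<Rightarrow> (nat \<Rightarrow> nat) \<Rightarrow> nat" where
  "cyc n \<sigma> = card (orbit_of \<sigma> ` {1..n})"

definition exc :: "nat \<Rightarrow> (nat \<Rightarrow> nat) \<Rightarrow> nat" where
  "exc n \<sigma> = card {i\<in>{1..n}. \<sigma> i > i}"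

definition cpk :: "nat \<Rightarrow> (nat \<Rightarrow> nat) \<Rightarrow> nat" where
  "cpk n \<sigma> = card {x\<in>{1..n}. inv \<sigma> x < x \<and> x > \<sigma> x}"

definition cycle_word :: "(nat \<Rightarrow> nat) \<Rightarrow> nat \<Rightarrow> nat list" where
  "cycle_word \<sigma> m = map (\<lambda>k. (\<sigma> ^^ k) m) [0..<card (orbit_of \<sigma> m)]"

(* iota: cycles starting with their largest element, ordered increasingly by largest element,
   parentheses erased *)
definition iota :: "nat \<Rightarrow> (nat \<Rightarrow> nat) \<Rightarrow> nat list" where
  "iota n \<sigma> = concat (map (cycle_word \<sigma>)
      (filter (\<lambda>m. m = Max (orbit_of \<sigma> m)) [1..<n+1]))"

(* position (0-based) of letter x in the word rho *)
definition pos_of :: "nat \<Rightarrow> nat list \<Rightarrow> nat" where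
  "pos_of x \<rho> = (LEAST p. p < length \<rho> \<and> \<rho> ! p = x)"

(* Modified Foata-Strehl: rho = w1 w2 x w3 w4 *)
definition fs_phi :: "nat \<Rightarrow> nat list \<Rightarrow> nat list" where
  "fs_phi x \<rho> = (let p = pos_of x \<rho>;
                     L = take p \<rho>; R = drop (Suc p) \<rho>;
                     w2 = rev (takeWhile (\<lambda>y. y < x) (rev L));
                     w1 = take (length L - length w2) L;
                     w3 = takeWhile (\<lambda>y. y < x) R;
                     w4 = dropWhile (\<lambda>y. y < x) R
                 in w1 @ w3 @ [x] @ w2 @ w4)"

(* x is a peak of rho, with rho(0) = 0 and rho(n+1) = infinity *)
definition is_peak :: "nat \<Rightarrow> nat list \<Rightarrow> bool" where
  "is_peak x \<rho> = (let p = pos_of x \<rho> in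
      (p = 0 \<or> \<rho> ! (p - 1) < x) \<and> (Suc p < length \<rho> \<and> \<rho> ! Suc p < x))"

definition fs_phi' :: "nat \<Rightarrow> nat list \<Rightarrow> nat list" where
  "fs_phi' x \<rho> = (if is_peak x \<rho> then \<rho> else fs_phi x \<rho>)"

definition tau_c :: "nat \<Rightarrow> nat \<Rightarrow> (nat \<Rightarrow> nat) \<Rightarrow> (nat \<Rightarrow> nat)" where
  "tau_c n x \<sigma> = (THE \<sigma>'. \<sigma>' permutes {1..n} \<and> iota n \<sigma>' = fs_phi' x (iota n \<sigma>))"

definition tau_c_set :: "nat \<Rightarrow> nat set \<Rightarrow> (nat \<Rightarrow> nat) \<Rightarrow> (nat \<Rightarrow> nat)" where
  "tau_c_set n S = fold (\<lambda>x f. tau_c n x \<circ> f) (sorted_list_of_set S) id"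

definition A_cyc_exc :: "nat \<Rightarrow> (nat \<Rightarrow> nat) set \<Rightarrow> real \<Rightarrow> real \<Rightarrow> real" where
  "A_cyc_exc n Pset w t = (\<Sum>\<sigma>\<in>Pset. w ^ cyc n \<sigma> * t ^ exc n \<sigma>)"

definition P_cyc_cpk_exc :: "nat \<Rightarrow> (nat \<Rightarrow> nat) set \<Rightarrow> real \<Rightarrow> real \<Rightarrow> real \<Rightarrow> real" where
  "P_cyc_cpk_exc n Pset w y t = (\<Sum>\<sigma>\<in>Pset. w ^ cyc n \<sigma> * y ^ cpk n \<sigma> * t ^ exc n \<sigma>)"

end

theory Submission
  imports Defs "HOL-Combinatorics.Multiset_Permutations"
begin

text \<open>Cutting the word \<open>iota n \<sigma>\<close> before its left-to-right maxima recovers the cycles of \<open>\<sigma>\<close>,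
  each written from its maximum. For a letter \<open>j\<close>, \<open>tau_c n j\<close> fixes \<open>\<sigma>\<close> when \<open>j\<close> is a cyclic
  peak or valley; otherwise it lets \<open>j\<close> hop over an adjacent run of smaller letters of its cycle,
  which exchanges cyclic double ascents and double descents at \<open>j\<close> and changes neither the
  number of cycles nor the type of any other letter. Hence, one letter at a time, the excedance
  weight of a letter (\<open>t\<close> or \<open>1\<close>) may be replaced by a weight \<open>c T\<close>, \<open>1\<close>, \<open>t\<close>, \<open>c\<close>
  depending on its cyclic type (double ascent, peak, valley, double descent) without changing the
  sum over \<open>\<Pi>\<close>, provided \<open>c T + c = 1 + t\<close>. Since cyclic peaks and valleys are equinumerous,
  the new weight of \<open>\<sigma>\<close> is \<open>c\<^sup>n Y\<^bsup>cpk \<sigma>\<^esup> T\<^bsup>exc \<sigma>\<^esup>\<close> when \<open>c\<^sup>2 Y T = t\<close>. The two stated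
  identities are the substitutions \<open>c = (1 + x t) / (1 + x)\<close>, \<open>T = (x + t) / (1 + x t)\<close> and
  \<open>c = (1 + u v) / (1 + u)\<close>, \<open>T = t\<close>, \<open>Y = x\<close> with \<open>v\<close> in place of \<open>t\<close>.\<close>

section \<open>Adjacency in words\<close>

definition adjacent :: "'a list \<Rightarrow> 'a \<Rightarrow> 'a \<Rightarrow> bool" where
  "adjacent xs a b \<longleftrightarrow> (\<exists>us vs. xs = us @ a # b # vs)"

definition cyc_adjacent :: "'a list \<Rightarrow> 'a \<Rightarrow> 'a \<Rightarrow> bool" where
  "cyc_adjacent xs a b \<longleftrightarrow> adjacent xs a b \<or> (xs \<noteq> [] \<and> a = last xs \<and> b = hd xs)"

lemma adjacent_Nil [simp]: "\<not> adjacent [] a b"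
  by (auto simp: adjacent_def)

lemma adjacent_Cons:
  "adjacent (x # xs) a b \<longleftrightarrow> (xs \<noteq> [] \<and> a = x \<and> b = hd xs) \<or> adjacent xs a b"
proof
  assume "adjacent (x # xs) a b"
  then obtain us vs where h: "x # xs = us @ a # b # vs" by (auto simp: adjacent_def)
  then show "(xs \<noteq> [] \<and> a = x \<and> b = hd xs) \<or> adjacent xs a b"
    by (cases us) (auto simp: adjacent_def)
next
  assume "(xs \<noteq> [] \<and> a = x \<and> b = hd xs) \<or> adjacent xs a b"
  then show "adjacent (x # xs) a b"
  proof
    assume "xs \<noteq> [] \<and> a = x \<and> b = hd xs"
    then show ?thesis
      unfolding adjacent_def by (intro exI[of _ "[]"] exI[of _ "tl xs"]) (cases xs; auto)
  next
    assume "adjacent xs a b"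
    then obtain us vs where "xs = us @ a # b # vs" by (auto simp: adjacent_def)
    then show ?thesis unfolding adjacent_def by (intro exI[of _ "x # us"] exI[of _ vs]) auto
  qed
qed

lemma adjacent_append:
  "adjacent (xs @ ys) a b \<longleftrightarrow>
     adjacent xs a b \<or> adjacent ys a b \<or> (xs \<noteq> [] \<and> ys \<noteq> [] \<and> a = last xs \<and> b = hd ys)"
  by (induction xs) (auto simp: adjacent_Cons)

lemma adjacent_iff_nth:
  "adjacent xs a b \<longleftrightarrow> (\<exists>i. Suc i < length xs \<and> a = xs ! i \<and> b = xs ! Suc i)"
proof
  assume "adjacent xs a b"
  then obtain us vs where "xs = us @ a # b # vs" by (auto simp: adjacent_def)
  then show "\<exists>i. Suc i < length xs \<and> a = xs ! i \<and> b = xs ! Suc i"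
    by (intro exI[of _ "length us"]) (simp add: nth_append)
next
  assume "\<exists>i. Suc i < length xs \<and> a = xs ! i \<and> b = xs ! Suc i"
  then obtain i where i: "Suc i < length xs" "a = xs ! i" "b = xs ! Suc i" by auto
  then have "xs = take i xs @ a # b # drop (Suc (Suc i)) xs"
    by (metis Cons_nth_drop_Suc Suc_lessD append_take_drop_id)
  then show "adjacent xs a b" unfolding adjacent_def by blast
qed

definition cyc_next :: "'a list \<Rightarrow> 'a \<Rightarrow> 'a" where
  "cyc_next xs y = the (map_of (zip xs (rotate1 xs)) y)"

lemma cyc_next_nth:
  "distinct xs \<Longrightarrow> i < length xs \<Longrightarrow> cyc_next xs (xs ! i) = xs ! (Suc i mod length xs)"
  by (simp add: cyc_next_def map_of_zip_nth nth_rotate1)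

lemma cyc_adjacent_iff_cyc_next:
  assumes "distinct xs"
  shows "cyc_adjacent xs a b \<longleftrightarrow> a \<in> set xs \<and> b = cyc_next xs a"
proof (cases "a \<in> set xs")
  case False
  then show ?thesis
    unfolding cyc_adjacent_def adjacent_def by (auto dest: last_in_set)
next
  case True
  then obtain i where i: "i < length xs" "a = xs ! i" by (auto simp: in_set_conv_nth)
  have next_a: "cyc_next xs a = xs ! (Suc i mod length xs)"
    using cyc_next_nth[OF assms i(1)] i(2) by simp
  have adj: "adjacent xs a b \<longleftrightarrow> Suc i < length xs \<and> b = xs ! Suc i"
    unfolding adjacent_iff_nth using i assms by (metis Suc_lessD nth_eq_iff_index_eq)
  have ne: "xs \<noteq> []" using i(1) by auto
  have last_a: "a = last xs \<longleftrightarrow> Suc i = length xs"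
    using i assms ne by (simp add: last_conv_nth nth_eq_iff_index_eq) linarith
  show ?thesis
  proof (cases "Suc i < length xs")
    case True
    then show ?thesis unfolding cyc_adjacent_def adj last_a next_a using \<open>a \<in> set xs\<close> by simp
  next
    case False
    then have "Suc i = length xs" using i(1) by simp
    then show ?thesis
      unfolding cyc_adjacent_def adj last_a next_a using ne \<open>a \<in> set xs\<close> by (simp add: hd_conv_nth)
  qed
qed

lemma cyc_next_inj:
  assumes "distinct xs" "a \<in> set xs" "a' \<in> set xs" "cyc_next xs a = cyc_next xs a'"
  shows "a = a'"
proof -
  obtain i i' where i: "i < length xs" "a = xs ! i" and i': "i' < length xs" "a' = xs ! i'"
    using assms(2,3) by (auto simp: in_set_conv_nth)
  have "xs ! (Suc i mod length xs) = xs ! (Suc i' mod length xs)"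
    using assms(4) cyc_next_nth[OF assms(1)] i i' by simp
  moreover have "Suc i mod length xs < length xs" "Suc i' mod length xs < length xs"
    using i(1) by (auto intro!: mod_less_divisor)
  ultimately have "Suc i mod length xs = Suc i' mod length xs"
    using assms(1) nth_eq_iff_index_eq by blast
  then have "i = i'" using i(1) i'(1) by (simp add: mod_Suc split: if_splits)
  then show ?thesis using i i' by simp
qed

definition cyc_ascent_from :: "nat list \<Rightarrow> nat \<Rightarrow> bool" where
  "cyc_ascent_from xs y \<longleftrightarrow> (\<forall>z. cyc_adjacent xs y z \<longrightarrow> y < z)"

definition cyc_ascent_to :: "nat list \<Rightarrow> nat \<Rightarrow> bool" where
  "cyc_ascent_to xs y \<longleftrightarrow> (\<forall>a. cyc_adjacent xs a y \<longrightarrow> a < y)"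

lemma cyc_ascent_from_iff: "distinct xs \<Longrightarrow> cyc_adjacent xs y z \<Longrightarrow> cyc_ascent_from xs y \<longleftrightarrow> y < z"
  unfolding cyc_ascent_from_def by (metis cyc_adjacent_iff_cyc_next)

lemma cyc_ascent_to_iff: "distinct xs \<Longrightarrow> cyc_adjacent xs a y \<Longrightarrow> cyc_ascent_to xs y \<longleftrightarrow> a < y"
  unfolding cyc_ascent_to_def by (metis cyc_adjacent_iff_cyc_next cyc_next_inj)

text \<open>In a block \<open>b1 @ j # w @ b4\<close> the letter \<open>j\<close> may hop over the run \<open>w\<close> of smaller letters;
  this is the only way the modified Foata--Strehl action moves a letter inside a cycle.\<close>

definition hop_context :: "nat list \<Rightarrow> nat \<Rightarrow> nat list \<Rightarrow> nat list \<Rightarrow> bool" where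
  "hop_context b1 j w b4 \<longleftrightarrow> b1 \<noteq> [] \<and> j < hd b1 \<and> j < last b1 \<and> w \<noteq> [] \<and> (\<forall>y\<in>set w. y < j)
     \<and> (b4 \<noteq> [] \<longrightarrow> j < hd b4)"

lemma cyc_adjacent_hop:
  fixes b1 w b4 :: "'a list"
  assumes "b1 \<noteq> []" "w \<noteq> []"
  defines "c \<equiv> if b4 = [] then hd b1 else hd b4"
  shows "cyc_adjacent (b1 @ j # w @ b4) a b \<longleftrightarrow>
      adjacent b1 a b \<or> adjacent w a b \<or> adjacent b4 a b \<or> (a = last b1 \<and> b = j)
      \<or> (a = j \<and> b = hd w) \<or> (a = last w \<and> b = c) \<or> (b4 \<noteq> [] \<and> a = last b4 \<and> b = hd b1)"
    and "cyc_adjacent (b1 @ w @ j # b4) a b \<longleftrightarrow>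
      adjacent b1 a b \<or> adjacent w a b \<or> adjacent b4 a b \<or> (a = last b1 \<and> b = hd w)
      \<or> (a = last w \<and> b = j) \<or> (a = j \<and> b = c) \<or> (b4 \<noteq> [] \<and> a = last b4 \<and> b = hd b1)"
  unfolding c_def cyc_adjacent_def using assms(1,2)
  by (cases "b4 = []"; auto simp: adjacent_append adjacent_Cons)+

lemma cyc_ascents_hop_letter:
  assumes d: "distinct (b1 @ j # w @ b4)" and hop: "hop_context b1 j w b4"
  shows "\<not> cyc_ascent_from (b1 @ j # w @ b4) j" "\<not> cyc_ascent_to (b1 @ j # w @ b4) j"
    and "cyc_ascent_from (b1 @ w @ j # b4) j" "cyc_ascent_to (b1 @ w @ j # b4) j"
proof -
  have b1: "b1 \<noteq> []" "j < hd b1" "j < last b1" and w: "w \<noteq> []" "hd w < j" "last w < j"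
    and b4: "b4 \<noteq> [] \<longrightarrow> j < hd b4"
    using hop unfolding hop_context_def by auto
  have d': "distinct (b1 @ w @ j # b4)" using d by auto
  have "j < (if b4 = [] then hd b1 else hd b4)" using b1 b4 by auto
  then show "\<not> cyc_ascent_from (b1 @ j # w @ b4) j" "\<not> cyc_ascent_to (b1 @ j # w @ b4) j"
    and "cyc_ascent_from (b1 @ w @ j # b4) j" "cyc_ascent_to (b1 @ w @ j # b4) j"
    using cyc_ascent_from_iff[OF d, of j "hd w"] cyc_ascent_to_iff[OF d, of "last b1" j]
      cyc_ascent_from_iff[OF d', of j "if b4 = [] then hd b1 else hd b4"]
      cyc_ascent_to_iff[OF d', of "last w" j] cyc_adjacent_hop[OF b1(1) w(1)] b1 w
    by simp_all
qed

lemma cyc_ascents_hop_other: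
  assumes d: "distinct (b1 @ j # w @ b4)" and hop: "hop_context b1 j w b4"
    and y: "y \<noteq> j"
  shows "cyc_ascent_from (b1 @ w @ j # b4) y \<longleftrightarrow> cyc_ascent_from (b1 @ j # w @ b4) y"
    and "cyc_ascent_to (b1 @ w @ j # b4) y \<longleftrightarrow> cyc_ascent_to (b1 @ j # w @ b4) y"
proof -
  have b1: "b1 \<noteq> []" "j < hd b1" "j < last b1" and w: "w \<noteq> []" "hd w < j" "last w < j"
    and b4: "b4 \<noteq> [] \<longrightarrow> j < hd b4"
    using hop unfolding hop_context_def by auto
  have d': "distinct (b1 @ w @ j # b4)" using d by auto
  define c where "c = (if b4 = [] then hd b1 else hd b4)"
  have jc: "j < c" unfolding c_def using b1 b4 by auto
  note adj = cyc_adjacent_hop[OF b1(1) w(1), of j b4, folded c_def]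
  consider "y = last b1" | "y = last w" | "y \<noteq> last b1" "y \<noteq> last w" by blast
  then show "cyc_ascent_from (b1 @ w @ j # b4) y \<longleftrightarrow> cyc_ascent_from (b1 @ j # w @ b4) y"
  proof cases
    case 1
    then show ?thesis using cyc_ascent_from_iff[OF d, of y j] cyc_ascent_from_iff[OF d', of y "hd w"]
      adj b1 w by simp
  next
    case 2
    then show ?thesis using cyc_ascent_from_iff[OF d, of y c] cyc_ascent_from_iff[OF d', of y j]
      adj jc w by simp
  qed (use adj y in \<open>simp add: cyc_ascent_from_def\<close>)
  consider "y = hd w" | "y = c" | "y \<noteq> hd w" "y \<noteq> c" by blast
  then show "cyc_ascent_to (b1 @ w @ j # b4) y \<longleftrightarrow> cyc_ascent_to (b1 @ j # w @ b4) y"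
  proof cases
    case 1
    then show ?thesis using cyc_ascent_to_iff[OF d, of j y] cyc_ascent_to_iff[OF d', of "last b1" y]
      adj b1 w by simp
  next
    case 2
    then show ?thesis using cyc_ascent_to_iff[OF d, of "last w" y] cyc_ascent_to_iff[OF d', of j y]
      adj jc w by simp
  qed (use adj y in \<open>simp add: cyc_ascent_to_def\<close>)
qed

section \<open>Cycles as blocks of the word \<open>iota n \<sigma>\<close>\<close>

function ltr_blocks :: "nat list \<Rightarrow> nat list list" where
  "ltr_blocks [] = []"
| "ltr_blocks (m # r) =
     (m # takeWhile (\<lambda>y. y < m) r) # ltr_blocks (dropWhile (\<lambda>y. y < m) r)"
  by pat_completeness auto
termination
  by (relation "Wellfounded.measure length") (auto simp: le_imp_less_Suc length_dropWhile_le)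

lemma concat_ltr_blocks [simp]: "concat (ltr_blocks W) = W"
  by (induction W rule: ltr_blocks.induct) auto

definition max_first :: "nat list \<Rightarrow> bool" where
  "max_first B \<longleftrightarrow> B \<noteq> [] \<and> (\<forall>y\<in>set (tl B). y < hd B)"

definition canonical_blocks :: "nat list list \<Rightarrow> bool" where
  "canonical_blocks Bs \<longleftrightarrow> (\<forall>B\<in>set Bs. max_first B) \<and> sorted_wrt (<) (map hd Bs)"

lemma hd_le_hd_ltr_blocks: "B \<in> set (ltr_blocks W) \<Longrightarrow> hd W \<le> hd B"
proof (induction W arbitrary: B rule: ltr_blocks.induct)
  case (2 m r)
  let ?d = "dropWhile (\<lambda>y. y < m) r"
  show ?case
  proof (cases "B \<in> set (ltr_blocks ?d)")
    case True
    then have "?d \<noteq> []" by (metis empty_iff empty_set ltr_blocks.simps(1))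
    then have "\<not> hd ?d < m" using hd_dropWhile by blast
    then show ?thesis using "2.IH"[OF True] by simp
  qed (use "2.prems" in simp)
qed simp

lemma canonical_ltr_blocks: "distinct W \<Longrightarrow> canonical_blocks (ltr_blocks W)"
proof (induction W rule: ltr_blocks.induct)
  case (2 m r)
  let ?d = "dropWhile (\<lambda>y. y < m) r"
  have "distinct ?d" using "2.prems" by (metis distinct.simps(2) distinct_drop dropWhile_eq_drop)
  then have IH: "canonical_blocks (ltr_blocks ?d)" using "2.IH" by blast
  have "m < hd B" if B: "B \<in> set (ltr_blocks ?d)" for B
  proof -
    have ne: "?d \<noteq> []" using B by (metis empty_iff empty_set ltr_blocks.simps(1))
    then have "\<not> hd ?d < m" using hd_dropWhile by blast
    moreover have "hd ?d \<noteq> m" using "2.prems" ne by (metis distinct.simps(2) hd_in_set set_dropWhileD)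
    ultimately show "m < hd B" using hd_le_hd_ltr_blocks[OF B] by simp
  qed
  moreover have "max_first (m # takeWhile (\<lambda>y. y < m) r)"
    unfolding max_first_def by (auto dest: set_takeWhileD)
  ultimately show ?case using IH by (auto simp: canonical_blocks_def)
qed (simp add: canonical_blocks_def)

lemma ltr_blocks_concat: "canonical_blocks Bs \<Longrightarrow> ltr_blocks (concat Bs) = Bs"
proof (induction Bs)
  case (Cons B Bs)
  have gB: "max_first B" and gBs: "canonical_blocks Bs" and lt: "\<forall>B'\<in>set Bs. hd B < hd B'"
    using Cons.prems by (auto simp: canonical_blocks_def)
  obtain m t where B: "B = m # t" and t: "\<forall>y\<in>set t. y < m"
    using gB by (cases B) (auto simp: max_first_def)
  have "concat Bs = [] \<or> \<not> hd (concat Bs) < m"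
  proof (cases Bs)
    case (Cons B1 Bs1)
    then have "B1 \<noteq> []" using gBs by (auto simp: canonical_blocks_def max_first_def)
    then show ?thesis using lt Cons B by auto
  qed simp
  moreover have "takeWhile (\<lambda>y. y < m) (t @ xs) = t \<and> dropWhile (\<lambda>y. y < m) (t @ xs) = xs"
    if "xs = [] \<or> \<not> hd xs < m" for xs
    using that t by (cases xs)
      (auto simp: takeWhile_append2 dropWhile_append2 takeWhile_eq_all_conv dropWhile_eq_Nil_conv)
  ultimately show ?case using Cons.IH[OF gBs] B by simp
qed simp

lemma canonical_blocks_nonempty: "canonical_blocks Bs \<Longrightarrow> B \<in> set Bs \<Longrightarrow> B \<noteq> []"
  by (auto simp: canonical_blocks_def max_first_def)

lemma Max_canonical_block:
  assumes "canonical_blocks Bs" "B \<in> set Bs"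
  shows "Max (set B) = hd B"
proof -
  obtain m t where "B = m # t" "\<forall>y\<in>set t. y < m"
    using assms by (cases B) (auto simp: canonical_blocks_def max_first_def)
  then show ?thesis by (intro Max_eqI) auto
qed

fun perm_of_blocks :: "nat list list \<Rightarrow> nat \<Rightarrow> nat" where
  "perm_of_blocks [] y = y"
| "perm_of_blocks (B # Bs) y = (if y \<in> set B then cyc_next B y else perm_of_blocks Bs y)"

lemma perm_of_blocks_in:
  "distinct (concat Bs) \<Longrightarrow> B \<in> set Bs \<Longrightarrow> y \<in> set B \<Longrightarrow> perm_of_blocks Bs y = cyc_next B y"
  by (induction Bs) auto

lemma perm_of_blocks_out: "y \<notin> set (concat Bs) \<Longrightarrow> perm_of_blocks Bs y = y"
  by (induction Bs) auto

lemma funpow_perm_of_blocks_nth: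
  assumes "distinct (concat Bs)" "B \<in> set Bs" "i < length B"
  shows "(perm_of_blocks Bs ^^ k) (B ! i) = B ! ((i + k) mod length B)"
proof (induction k)
  case (Suc k)
  have d: "distinct B" using assms(1,2) by (simp add: distinct_concat_iff)
  have L: "0 < length B" using assms(3) by linarith
  have "(perm_of_blocks Bs ^^ Suc k) (B ! i) = cyc_next B (B ! ((i + k) mod length B))"
    using Suc perm_of_blocks_in[OF assms(1,2)] L by simp
  also have "\<dots> = B ! ((i + Suc k) mod length B)"
    using cyc_next_nth[OF d] L by (simp add: mod_Suc_eq)
  finally show ?case .
qed (use assms(3) in simp)

lemma perm_of_blocks_in_block:
  assumes "distinct (concat Bs)" "B \<in> set Bs" "y \<in> set B"
  shows "perm_of_blocks Bs y \<in> set B"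
proof -
  obtain i where i: "i < length B" "y = B ! i" using assms(3) by (auto simp: in_set_conv_nth)
  then have "0 < length B" by linarith
  then show ?thesis using funpow_perm_of_blocks_nth[OF assms(1,2) i(1), of 1] i(2) by simp
qed

lemma orbit_perm_of_blocks:
  assumes "distinct (concat Bs)" "B \<in> set Bs" "y \<in> set B"
  shows "orbit_of (perm_of_blocks Bs) y = set B"
proof -
  obtain i where i: "i < length B" "y = B ! i" using assms(3) by (auto simp: in_set_conv_nth)
  have orb: "orbit_of (perm_of_blocks Bs) y = {B ! ((i + k) mod length B) | k. True}"
    unfolding orbit_of_def using funpow_perm_of_blocks_nth[OF assms(1,2) i(1)] i(2) by simp
  show ?thesis
  proof
    have "0 < length B" using i(1) by linarith
    then show "orbit_of (perm_of_blocks Bs) y \<subseteq> set B" unfolding orb by auto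
  next
    show "set B \<subseteq> orbit_of (perm_of_blocks Bs) y"
    proof
      fix z assume "z \<in> set B"
      then obtain j where j: "j < length B" "z = B ! j" by (auto simp: in_set_conv_nth)
      have "(i + (j + length B - i)) mod length B = j" using i(1) j(1) by simp
      then show "z \<in> orbit_of (perm_of_blocks Bs) y"
        unfolding orb using j(2) by (metis (mono_tags, lifting) mem_Collect_eq)
    qed
  qed
qed

lemma perm_of_blocks_permutes:
  assumes d: "distinct (concat Bs)"
  shows "perm_of_blocks Bs permutes set (concat Bs)"
proof (rule bij_imp_permutes)
  have sub: "perm_of_blocks Bs ` set (concat Bs) \<subseteq> set (concat Bs)"
    using perm_of_blocks_in_block[OF d] by fastforce
  have "inj_on (perm_of_blocks Bs) (set (concat Bs))"
  proof (rule inj_onI)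
    fix y y' assume "y \<in> set (concat Bs)" "y' \<in> set (concat Bs)"
      and eq: "perm_of_blocks Bs y = perm_of_blocks Bs y'"
    then obtain B B' where B: "B \<in> set Bs" "y \<in> set B" and B': "B' \<in> set Bs" "y' \<in> set B'"
      by auto
    have "perm_of_blocks Bs y \<in> set B" "perm_of_blocks Bs y' \<in> set B'"
      using perm_of_blocks_in_block[OF d] B B' by blast+
    then have "B = B'" using d B B' eq by (auto simp: distinct_concat_iff)
    then show "y = y'"
      using cyc_next_inj[of B y y'] perm_of_blocks_in[OF d] B B' eq d
      by (simp add: distinct_concat_iff)
  qed
  then show "bij_betw (perm_of_blocks Bs) (set (concat Bs)) (set (concat Bs))"
    using sub by (simp add: bij_betw_def endo_inj_surj)
qed (rule perm_of_blocks_out)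

lemma cycle_leaders_perm_of_blocks:
  assumes g: "canonical_blocks Bs" and d: "distinct (concat Bs)" and s: "set (concat Bs) = {1..n}"
  shows "filter (\<lambda>m. m = Max (orbit_of (perm_of_blocks Bs) m)) [1..<n+1] = map hd Bs"
proof (rule sorted_distinct_set_unique)
  let ?p = "perm_of_blocks Bs"
  note orb = orbit_perm_of_blocks[OF d]
  show "sorted (filter (\<lambda>m. m = Max (orbit_of ?p m)) [1..<n+1])"
    using sorted_upt by (rule sorted_wrt_filter)
  show "sorted (map hd Bs)" "distinct (map hd Bs)"
    using g by (auto simp: canonical_blocks_def strict_sorted_iff)
  show "set (filter (\<lambda>m. m = Max (orbit_of ?p m)) [1..<n+1]) = set (map hd Bs)"
  proof (rule set_eqI, rule iffI)
    fix m assume "m \<in> set (filter (\<lambda>m. m = Max (orbit_of ?p m)) [1..<n+1])"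
    then have "m \<in> {1..<n+1}" and m: "m = Max (orbit_of ?p m)"
      by (simp_all only: set_filter set_upt mem_Collect_eq)
    then have "m \<in> set (concat Bs)" using s by auto
    then obtain B where B: "B \<in> set Bs" "m \<in> set B" by auto
    then have "m = hd B" using m orb[OF B] Max_canonical_block[OF g B(1)] by simp
    then show "m \<in> set (map hd Bs)" using B(1) by auto
  next
    fix m assume "m \<in> set (map hd Bs)"
    then obtain B where B: "B \<in> set Bs" "m = hd B" by auto
    then have mB: "m \<in> set B" using canonical_blocks_nonempty[OF g B(1)] by simp
    then have "m \<in> {1..n}" using s B(1) by auto
    moreover have "m = Max (orbit_of ?p m)"
      using orb[OF B(1) mB] Max_canonical_block[OF g B(1)] B(2) by simp
    ultimately show "m \<in> set (filter (\<lambda>m. m = Max (orbit_of ?p m)) [1..<n+1])"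
      by (simp only: set_filter set_upt) auto
  qed
qed simp

lemma iota_perm_of_blocks:
  assumes g: "canonical_blocks Bs" and d: "distinct (concat Bs)" and s: "set (concat Bs) = {1..n}"
  shows "iota n (perm_of_blocks Bs) = concat Bs"
proof -
  let ?p = "perm_of_blocks Bs"
  note ne = canonical_blocks_nonempty[OF g]
  have "cycle_word ?p (hd B) = B" if B: "B \<in> set Bs" for B
  proof -
    have hB: "hd B \<in> set B" "hd B = B ! 0" using ne[OF B] by (auto simp: hd_conv_nth)
    have "distinct B" using d B by (simp add: distinct_concat_iff)
    then have "card (orbit_of ?p (hd B)) = length B"
      using orbit_perm_of_blocks[OF d B hB(1)] distinct_card by simp
    moreover have "map (\<lambda>k. (?p ^^ k) (hd B)) [0..<length B] = map (\<lambda>k. B ! k) [0..<length B]"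
      using funpow_perm_of_blocks_nth[OF d B, of 0] hB(2) ne[OF B] by simp
    ultimately show ?thesis unfolding cycle_word_def by (simp add: map_nth)
  qed
  then have "map (cycle_word ?p) (map hd Bs) = Bs" by (simp add: map_idI)
  then show ?thesis unfolding iota_def cycle_leaders_perm_of_blocks[OF g d s] by simp
qed

lemma cyc_perm_of_blocks:
  assumes g: "canonical_blocks Bs" and d: "distinct (concat Bs)" and s: "set (concat Bs) = {1..n}"
  shows "cyc n (perm_of_blocks Bs) = length Bs"
proof -
  note ne = canonical_blocks_nonempty[OF g]
  have "orbit_of (perm_of_blocks Bs) ` {1..n} = set ` set Bs"
  proof
    show "orbit_of (perm_of_blocks Bs) ` {1..n} \<subseteq> set ` set Bs"
    proof
      fix A assume "A \<in> orbit_of (perm_of_blocks Bs) ` {1..n}"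
      then obtain y where "y \<in> {1..n}" and y: "A = orbit_of (perm_of_blocks Bs) y" by blast
      then have "y \<in> set (concat Bs)" using s by blast
      then obtain B where "B \<in> set Bs" "y \<in> set B" by auto
      then show "A \<in> set ` set Bs" using orbit_perm_of_blocks[OF d] y by auto
    qed
    show "set ` set Bs \<subseteq> orbit_of (perm_of_blocks Bs) ` {1..n}"
    proof
      fix A assume "A \<in> set ` set Bs"
      then obtain B where B: "B \<in> set Bs" "A = set B" by auto
      have hB: "hd B \<in> set B" using ne[OF B(1)] by simp
      then have "hd B \<in> set (concat Bs)" using B(1) by auto
      then have "hd B \<in> {1..n}" by (simp only: s)
      moreover have "A = orbit_of (perm_of_blocks Bs) (hd B)"
        using orbit_perm_of_blocks[OF d B(1) hB] B(2) by simp
      ultimately show "A \<in> orbit_of (perm_of_blocks Bs) ` {1..n}" by blast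
    qed
  qed
  moreover have "inj_on set (set Bs)"
  proof
    fix B1 B2 assume B: "B1 \<in> set Bs" "B2 \<in> set Bs" "set B1 = set B2"
    then have "hd B1 \<in> set B1 \<inter> set B2" using ne[OF B(1)] by (metis Int_absorb list.set_sel(1))
    then show "B1 = B2" using d B(1,2) by (auto simp: distinct_concat_iff)
  qed
  moreover have "distinct Bs"
  proof -
    have "removeAll [] Bs = Bs" using ne by (induction Bs) auto
    then show ?thesis using d by (metis distinct_concat_iff)
  qed
  ultimately show ?thesis unfolding cyc_def by (simp add: card_image distinct_card)
qed

definition perm_of_word :: "nat list \<Rightarrow> nat \<Rightarrow> nat" where
  "perm_of_word W = perm_of_blocks (ltr_blocks W)"

lemma perm_of_word:
  assumes "W \<in> permutations_of_set {1..n}"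
  shows "perm_of_word W permutes {1..n}" "iota n (perm_of_word W) = W"
proof -
  have d: "distinct W" and s: "set W = {1..n}" using assms by (auto simp: permutations_of_set_def)
  show "perm_of_word W permutes {1..n}"
    using perm_of_blocks_permutes[of "ltr_blocks W"] d s by (simp add: perm_of_word_def)
  show "iota n (perm_of_word W) = W"
    using iota_perm_of_blocks[OF canonical_ltr_blocks[OF d]] d s by (simp add: perm_of_word_def)
qed

lemma permutes_eq_perm_of_word:
  assumes "\<sigma> permutes {1..n}"
  shows "\<exists>W \<in> permutations_of_set {1..n}. \<sigma> = perm_of_word W"
proof -
  let ?Ws = "permutations_of_set {1..n}"
  let ?Ps = "{\<sigma>. \<sigma> permutes {1..n}}"
  have inj: "inj_on perm_of_word ?Ws" by (metis inj_onI perm_of_word(2))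
  have "perm_of_word ` ?Ws \<subseteq> ?Ps" using perm_of_word(1) by blast
  moreover have "card (perm_of_word ` ?Ws) = card ?Ps"
    using card_image[OF inj] card_permutations[of "{1..n}" n] by simp
  ultimately have "perm_of_word ` ?Ws = ?Ps"
    using finite_permutations[of "{1..n}"] by (metis card_subset_eq finite_atLeastAtMost)
  then show ?thesis using assms by blast
qed

lemma iota_permutes:
  assumes "\<sigma> permutes {1..n}"
  shows "iota n \<sigma> \<in> permutations_of_set {1..n}" "perm_of_word (iota n \<sigma>) = \<sigma>"
  using permutes_eq_perm_of_word[OF assms] perm_of_word(2) by metis+

section \<open>The modified Foata--Strehl action on words\<close>

lemma pos_of_append: "distinct (us @ x # vs) \<Longrightarrow> pos_of x (us @ x # vs) = length us"
  unfolding pos_of_def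
proof (rule Least_equality)
  fix p assume "distinct (us @ x # vs)" and p: "p < length (us @ x # vs) \<and> (us @ x # vs) ! p = x"
  show "length us \<le> p"
  proof (rule ccontr)
    assume "\<not> length us \<le> p"
    then have "x \<in> set us" using p by (metis not_le nth_append nth_mem)
    then show False using \<open>distinct (us @ x # vs)\<close> by simp
  qed
qed simp

definition fs_factorization :: "nat \<Rightarrow> nat list \<Rightarrow> nat list \<Rightarrow> nat list \<Rightarrow> nat list \<Rightarrow> bool" where
  "fs_factorization x w1 w2 w3 w4 \<longleftrightarrow> (\<forall>y\<in>set w2. y < x) \<and> (\<forall>y\<in>set w3. y < x)
     \<and> (w1 \<noteq> [] \<longrightarrow> \<not> last w1 < x) \<and> (w4 \<noteq> [] \<longrightarrow> \<not> hd w4 < x)"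

lemma fs_factorization_exists:
  assumes "x \<in> set \<rho>"
  obtains w1 w2 w3 w4 where "\<rho> = w1 @ w2 @ x # w3 @ w4" "fs_factorization x w1 w2 w3 w4"
proof -
  obtain us vs where r: "\<rho> = us @ x # vs" using assms by (metis split_list)
  define w1 where "w1 = rev (dropWhile (\<lambda>y. y < x) (rev us))"
  define w2 where "w2 = rev (takeWhile (\<lambda>y. y < x) (rev us))"
  define w3 where "w3 = takeWhile (\<lambda>y. y < x) vs"
  define w4 where "w4 = dropWhile (\<lambda>y. y < x) vs"
  have "us = w1 @ w2"
    unfolding w1_def w2_def by (metis rev_append rev_rev_ident takeWhile_dropWhile_id)
  moreover have "vs = w3 @ w4" unfolding w3_def w4_def by simp
  moreover have "fs_factorization x w1 w2 w3 w4" unfolding fs_factorization_def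
  proof (intro conjI impI)
    show "\<forall>y\<in>set w2. y < x" "\<forall>y\<in>set w3. y < x"
      unfolding w2_def w3_def by (auto dest: set_takeWhileD)
    assume "w1 \<noteq> []"
    then have ne: "dropWhile (\<lambda>y. y < x) (rev us) \<noteq> []" unfolding w1_def by simp
    then have "last w1 = hd (dropWhile (\<lambda>y. y < x) (rev us))" unfolding w1_def by (simp add: last_rev)
    then show "\<not> last w1 < x" using hd_dropWhile[OF ne] by simp
  next
    assume "w4 \<noteq> []"
    then show "\<not> hd w4 < x" unfolding w4_def using hd_dropWhile by blast
  qed
  ultimately show ?thesis using that r by simp
qed

lemma fs_phi_factorization:
  assumes d: "distinct (w1 @ w2 @ x # w3 @ w4)" and f: "fs_factorization x w1 w2 w3 w4"
  shows "fs_phi x (w1 @ w2 @ x # w3 @ w4) = w1 @ w3 @ x # w2 @ w4"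
proof -
  let ?r = "w1 @ w2 @ x # w3 @ w4"
  have p: "pos_of x ?r = length (w1 @ w2)" using pos_of_append[of "w1 @ w2" x "w3 @ w4"] d by simp
  have w2: "takeWhile (\<lambda>y. y < x) (rev (w1 @ w2)) = rev w2"
  proof (cases w1 rule: rev_cases)
    case (snoc w1' a)
    then show ?thesis
      using f takeWhile_append2[of "rev w2" "\<lambda>y. y < x" "a # rev w1'"]
      by (simp add: fs_factorization_def)
  qed (use f in \<open>simp add: fs_factorization_def takeWhile_eq_all_conv\<close>)
  have w34: "takeWhile (\<lambda>y. y < x) (w3 @ w4) = w3" "dropWhile (\<lambda>y. y < x) (w3 @ w4) = w4"
    using f by (cases w4; simp add: fs_factorization_def takeWhile_append2 dropWhile_append2
        takeWhile_eq_all_conv dropWhile_eq_Nil_conv)+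
  have L: "take (length (w1 @ w2)) ?r = w1 @ w2" and R: "drop (Suc (length (w1 @ w2))) ?r = w3 @ w4"
    by simp_all
  show ?thesis unfolding fs_phi_def Let_def p L R w2 w34 by simp
qed

lemma is_peak_append:
  assumes "distinct (us @ x # vs)"
  shows "is_peak x (us @ x # vs) \<longleftrightarrow> (us = [] \<or> last us < x) \<and> (vs \<noteq> [] \<and> hd vs < x)"
proof -
  have "us \<noteq> [] \<Longrightarrow> (us @ x # vs) ! (length us - 1) = last us"
    by (simp add: nth_append last_conv_nth)
  moreover have "vs \<noteq> [] \<Longrightarrow> (us @ x # vs) ! Suc (length us) = hd vs"
    by (simp add: nth_append hd_conv_nth)
  ultimately show ?thesis
    unfolding is_peak_def Let_def pos_of_append[OF assms] by (cases "us = []") auto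
qed

lemma fs_phi'_factorization:
  assumes d: "distinct (w1 @ w2 @ x # w3 @ w4)" and f: "fs_factorization x w1 w2 w3 w4"
  shows "fs_phi' x (w1 @ w2 @ x # w3 @ w4) =
    (if (w1 = [] \<or> w2 \<noteq> []) \<and> w3 \<noteq> [] then w1 @ w2 @ x # w3 @ w4 else w1 @ w3 @ x # w2 @ w4)"
proof -
  have "(w1 @ w2 = [] \<or> last (w1 @ w2) < x) \<longleftrightarrow> (w1 = [] \<or> w2 \<noteq> [])"
    using f by (cases "w2 = []") (auto simp: fs_factorization_def)
  moreover have "(w3 @ w4 \<noteq> [] \<and> hd (w3 @ w4) < x) \<longleftrightarrow> w3 \<noteq> []"
    using f by (cases "w3 = []") (auto simp: fs_factorization_def)
  ultimately have "is_peak x (w1 @ w2 @ x # w3 @ w4) \<longleftrightarrow> (w1 = [] \<or> w2 \<noteq> []) \<and> w3 \<noteq> []"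
    using is_peak_append[of "w1 @ w2" x "w3 @ w4"] d by simp
  then show ?thesis unfolding fs_phi'_def fs_phi_factorization[OF d f] by (rule if_cong) simp_all
qed

lemma mset_fs_phi': "x \<in> set \<rho> \<Longrightarrow> distinct \<rho> \<Longrightarrow> mset (fs_phi' x \<rho>) = mset \<rho>"
  by (erule fs_factorization_exists) (simp add: fs_phi'_factorization)

lemma fs_phi'_permutations_of_set:
  assumes "W \<in> permutations_of_set {1..n}" "x \<in> {1..n}"
  shows "fs_phi' x W \<in> permutations_of_set {1..n}"
proof -
  have "distinct W" "set W = {1..n}" using assms(1) by (auto simp: permutations_of_set_def)
  moreover have "mset (fs_phi' x W) = mset W" using mset_fs_phi' assms calculation by blast
  ultimately show ?thesis
    by (metis mset_eq_imp_distinct_iff mset_eq_setD permutations_of_setI)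
qed

lemma tau_c_eq_perm_of_word:
  assumes "\<sigma> permutes {1..n}" "x \<in> {1..n}"
  shows "tau_c n x \<sigma> = perm_of_word (fs_phi' x (iota n \<sigma>))"
proof -
  have w: "fs_phi' x (iota n \<sigma>) \<in> permutations_of_set {1..n}"
    by (rule fs_phi'_permutations_of_set[OF iota_permutes(1)[OF assms(1)] assms(2)])
  show ?thesis unfolding tau_c_def
  proof (rule the_equality)
    fix \<sigma>' assume "\<sigma>' permutes {1..n} \<and> iota n \<sigma>' = fs_phi' x (iota n \<sigma>)"
    then show "\<sigma>' = perm_of_word (fs_phi' x (iota n \<sigma>))" by (metis iota_permutes(2))
  qed (use perm_of_word[OF w] in simp)
qed

section \<open>Cyclic statistics and the action on a single cycle\<close>

lemma perm_of_blocks_stats: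
  assumes d: "distinct (concat Bs)" and B: "B \<in> set Bs" and y: "y \<in> set B"
  shows "y < perm_of_blocks Bs y \<longleftrightarrow> cyc_ascent_from B y"
    and "inv (perm_of_blocks Bs) y < y \<longleftrightarrow> cyc_ascent_to B y"
proof -
  have dB: "distinct B" using d B by (simp add: distinct_concat_iff)
  show "y < perm_of_blocks Bs y \<longleftrightarrow> cyc_ascent_from B y"
    using cyc_ascent_from_iff[OF dB] cyc_adjacent_iff_cyc_next[OF dB] perm_of_blocks_in[OF d B y] y
    by simp
  have perm: "perm_of_blocks Bs permutes set (concat Bs)" by (rule perm_of_blocks_permutes[OF d])
  define a where "a = inv (perm_of_blocks Bs) y"
  have "y \<in> set (concat Bs)" using B y by auto
  then have a: "perm_of_blocks Bs a = y" "a \<in> set (concat Bs)"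
    unfolding a_def using permutes_inverses(1)[OF perm] permutes_in_image[OF permutes_inv[OF perm]]
    by auto
  then obtain B' where B': "B' \<in> set Bs" "a \<in> set B'" by auto
  then have "y \<in> set B'" using perm_of_blocks_in_block[OF d] a(1) by blast
  then have "B' = B" using d B B' y by (auto simp: distinct_concat_iff)
  then have "cyc_adjacent B a y"
    using cyc_adjacent_iff_cyc_next[OF dB] perm_of_blocks_in[OF d B] a(1) B'(2) by simp
  then show "inv (perm_of_blocks Bs) y < y \<longleftrightarrow> cyc_ascent_to B y"
    using cyc_ascent_to_iff[OF dB] a_def by simp
qed

lemma derangement_permutes: "\<sigma> \<in> derangements n \<Longrightarrow> \<sigma> permutes {1..n}"
  by (simp add: derangements_def)

lemma derangement_blocks:
  assumes "\<sigma> \<in> derangements n"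
  defines "Bs \<equiv> ltr_blocks (iota n \<sigma>)"
  shows "canonical_blocks Bs" "distinct (concat Bs)" "set (concat Bs) = {1..n}"
    and "\<sigma> = perm_of_blocks Bs" "\<And>B. B \<in> set Bs \<Longrightarrow> 2 \<le> length B"
proof -
  have perm: "\<sigma> permutes {1..n}" and fix_free: "\<forall>i\<in>{1..n}. \<sigma> i \<noteq> i"
    using assms(1) by (auto simp: derangements_def)
  then have "distinct (iota n \<sigma>)" "set (iota n \<sigma>) = {1..n}"
    using iota_permutes(1) by (auto simp: permutations_of_set_def)
  then show g: "canonical_blocks Bs" and d: "distinct (concat Bs)" and s: "set (concat Bs) = {1..n}"
    unfolding Bs_def using canonical_ltr_blocks by simp_all
  show \<sigma>: "\<sigma> = perm_of_blocks Bs"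
    using iota_permutes(2)[OF perm] unfolding Bs_def perm_of_word_def by simp
  fix B assume B: "B \<in> set Bs"
  show "2 \<le> length B"
  proof (rule ccontr)
    assume "\<not> 2 \<le> length B"
    then obtain m where m: "B = [m]" using canonical_blocks_nonempty[OF g B]
      by (cases B) (auto simp: Suc_le_eq)
    then have "\<sigma> m = m" using perm_of_blocks_in[OF d B] cyc_next_nth[of B 0] \<sigma> by simp
    moreover have "m \<in> set (concat Bs)" using B m by force
    then have "m \<in> {1..n}" by (simp only: s)
    ultimately show False using fix_free by blast
  qed
qed

lemma fs_phi'_hop:
  assumes d: "distinct (b1 @ j # w @ b4)" and hop: "hop_context b1 j w b4"
  shows "fs_phi' j (b1 @ j # w @ b4) = b1 @ w @ j # b4"
    and "fs_phi' j (b1 @ w @ j # b4) = b1 @ j # w @ b4"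
proof -
  have "fs_factorization j b1 [] w b4" "fs_factorization j b1 w [] b4" "w \<noteq> []" "b1 \<noteq> []"
    using hop by (auto simp: hop_context_def fs_factorization_def)
  moreover have "distinct (b1 @ [] @ j # w @ b4)" "distinct (b1 @ w @ j # [] @ b4)"
    using d by auto
  ultimately show "fs_phi' j (b1 @ j # w @ b4) = b1 @ w @ j # b4"
    and "fs_phi' j (b1 @ w @ j # b4) = b1 @ j # w @ b4"
    using fs_phi'_factorization[of b1 "[]" j w b4] fs_phi'_factorization[of b1 w j "[]" b4]
    by simp_all
qed

lemma max_first_factorization:
  assumes g: "max_first B" and d: "distinct B" and j: "j \<in> set B" "j \<noteq> hd B"
  obtains b1 w2 w3 b4 where "B = b1 @ w2 @ j # w3 @ b4" "fs_factorization j b1 w2 w3 b4"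
    "b1 \<noteq> []" "j < hd b1" "j < last b1" "b4 \<noteq> [] \<longrightarrow> j < hd b4"
proof -
  obtain b1 w2 w3 b4 where B: "B = b1 @ w2 @ j # w3 @ b4" and f: "fs_factorization j b1 w2 w3 b4"
    using fs_factorization_exists[OF j(1)] by blast
  have jhd: "j < hd B" using g j by (cases B) (auto simp: max_first_def)
  have b1: "b1 \<noteq> []"
  proof
    assume "b1 = []"
    then have "hd B = j \<or> hd B \<in> set w2" using B by (cases w2) auto
    then show False using jhd f by (auto simp: fs_factorization_def)
  qed
  moreover have "j \<notin> set b1" "j \<notin> set b4" using d B by auto
  then have "last b1 \<noteq> j" "b4 \<noteq> [] \<longrightarrow> hd b4 \<noteq> j" using b1 by (metis last_in_set, metis hd_in_set)
  then have "j < last b1" "b4 \<noteq> [] \<longrightarrow> j < hd b4"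
    using f b1 by (auto simp: fs_factorization_def)
  moreover have "j < hd b1" using jhd B b1 by simp
  ultimately show ?thesis using that B f by blast
qed

lemma fs_phi'_hd_max_first_block:
  assumes g: "max_first B" and d: "distinct B" and len: "2 \<le> length B"
  shows "fs_phi' (hd B) B = B" "cyc_ascent_to B (hd B)" "\<not> cyc_ascent_from B (hd B)"
proof -
  obtain m t where B: "B = m # t" and t: "t \<noteq> []" "\<forall>y\<in>set t. y < m"
    using g len by (cases B) (auto simp: max_first_def Suc_le_length_iff)
  have "fs_factorization m [] [] t []" using t by (simp add: fs_factorization_def)
  then show "fs_phi' (hd B) B = B" using fs_phi'_factorization[of "[]" "[]" m t "[]"] d t B by simp
  have "cyc_adjacent B (last t) m" "cyc_adjacent B m (hd t)"
    using B t by (simp_all add: cyc_adjacent_def adjacent_Cons)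
  moreover have "last t < m" "hd t < m" using t by simp_all
  ultimately show "cyc_ascent_to B (hd B)" "\<not> cyc_ascent_from B (hd B)"
    using cyc_ascent_to_iff[OF d] cyc_ascent_from_iff[OF d] B by simp_all
qed

lemma fs_phi'_max_first_block_cases:
  assumes g: "max_first B" and d: "distinct B" and len: "2 \<le> length B" and j: "j \<in> set B"
  obtains (fixed) "fs_phi' j B = B" "cyc_ascent_from B j \<noteq> cyc_ascent_to B j"
  | (hop) b1 w b4 where "hop_context b1 j w b4"
      "B = b1 @ j # w @ b4 \<and> fs_phi' j B = b1 @ w @ j # b4
       \<or> B = b1 @ w @ j # b4 \<and> fs_phi' j B = b1 @ j # w @ b4"
proof (cases "j = hd B")
  case True
  then show ?thesis using fixed fs_phi'_hd_max_first_block[OF g d len] by auto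
next
  case False
  then obtain b1 w2 w3 b4 where B: "B = b1 @ w2 @ j # w3 @ b4" and f: "fs_factorization j b1 w2 w3 b4"
    and b1: "b1 \<noteq> []" "j < hd b1" "j < last b1" and b4: "b4 \<noteq> [] \<longrightarrow> j < hd b4"
    by (rule max_first_factorization[OF g d j])
  have w23: "\<forall>y\<in>set w2. y < j" "\<forall>y\<in>set w3. y < j" using f by (simp_all add: fs_factorization_def)
  have phi: "fs_phi' j B = (if w2 \<noteq> [] \<and> w3 \<noteq> [] then B else b1 @ w3 @ j # w2 @ b4)"
    using fs_phi'_factorization[OF _ f] d B b1 by simp
  consider (peak) "w2 \<noteq> []" "w3 \<noteq> []" | (valley) "w2 = []" "w3 = []"
    | (right) "w2 = []" "w3 \<noteq> []" | (left) "w2 \<noteq> []" "w3 = []"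
    by blast
  then show ?thesis
  proof cases
    case peak
    have "cyc_adjacent B (last w2) j" "cyc_adjacent B j (hd w3)"
      using B peak by (simp_all add: cyc_adjacent_def adjacent_append adjacent_Cons)
    moreover have "last w2 < j" "hd w3 < j" using w23 peak by simp_all
    ultimately have "cyc_ascent_to B j" "\<not> cyc_ascent_from B j"
      using cyc_ascent_to_iff[OF d] cyc_ascent_from_iff[OF d] by simp_all
    then show ?thesis using fixed phi peak by simp
  next
    case valley
    let ?c = "if b4 = [] then hd b1 else hd b4"
    have "cyc_adjacent B (last b1) j" "cyc_adjacent B j ?c"
      using B valley b1 by (simp_all add: cyc_adjacent_def adjacent_append adjacent_Cons)
    then have "\<not> cyc_ascent_to B j" "cyc_ascent_from B j"
      using cyc_ascent_to_iff[OF d] cyc_ascent_from_iff[OF d] b1 b4 by auto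
    then show ?thesis using fixed phi valley B by simp
  next
    case right
    then have "hop_context b1 j w3 b4" using b1 b4 w23 by (simp add: hop_context_def)
    then show ?thesis using hop phi right B by simp
  next
    case left
    then have "hop_context b1 j w2 b4" using b1 b4 w23 by (simp add: hop_context_def)
    then show ?thesis using hop phi left B by simp
  qed
qed

lemma fs_phi'_max_first_block:
  assumes "max_first B" "distinct B" "2 \<le> length B" "j \<in> set B"
  shows "max_first (fs_phi' j B)" "hd (fs_phi' j B) = hd B" "mset (fs_phi' j B) = mset B"
    and "fs_phi' j (fs_phi' j B) = B"
proof -
  have "max_first (fs_phi' j B) \<and> hd (fs_phi' j B) = hd B \<and> mset (fs_phi' j B) = mset B
    \<and> fs_phi' j (fs_phi' j B) = B"
    using assms
  proof (cases rule: fs_phi'_max_first_block_cases)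
    case (hop b1 w b4)
    then obtain m r where b1: "b1 = m # r" by (cases b1) (auto simp: hop_context_def)
    let ?L = "b1 @ j # w @ b4" and ?L' = "b1 @ w @ j # b4"
    have "mset ?L' = mset ?L" by simp
    then have dL: "distinct ?L" using assms(2) hop(2) by (metis mset_eq_imp_distinct_iff)
    have "set (tl ?L) = set (tl ?L')" using b1 by auto
    then have "max_first ?L \<longleftrightarrow> max_first ?L'" using b1 by (simp add: max_first_def)
    then show ?thesis using hop(2) assms(1) b1 fs_phi'_hop[OF dL hop(1)] by auto
  qed (use assms(1) in simp)
  then show "max_first (fs_phi' j B)" "hd (fs_phi' j B) = hd B" "mset (fs_phi' j B) = mset B"
    and "fs_phi' j (fs_phi' j B) = B" by simp_all
qed

lemma cyc_ascents_fs_phi'_block: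
  assumes "max_first B" "distinct B" "2 \<le> length B" "j \<in> set B"
  shows "\<And>y. y \<in> set B \<Longrightarrow> y \<noteq> j \<Longrightarrow> cyc_ascent_from (fs_phi' j B) y = cyc_ascent_from B y
          \<and> cyc_ascent_to (fs_phi' j B) y = cyc_ascent_to B y"
    and "cyc_ascent_from B j \<noteq> cyc_ascent_to B j \<Longrightarrow> fs_phi' j B = B"
    and "cyc_ascent_from B j = cyc_ascent_to B j \<Longrightarrow>
          cyc_ascent_from (fs_phi' j B) j = (\<not> cyc_ascent_from B j)
          \<and> cyc_ascent_to (fs_phi' j B) j = (\<not> cyc_ascent_to B j)"
proof -
  have "(\<forall>y\<in>set B. y \<noteq> j \<longrightarrow> cyc_ascent_from (fs_phi' j B) y = cyc_ascent_from B y
          \<and> cyc_ascent_to (fs_phi' j B) y = cyc_ascent_to B y)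
    \<and> (cyc_ascent_from B j \<noteq> cyc_ascent_to B j \<longrightarrow> fs_phi' j B = B)
    \<and> (cyc_ascent_from B j = cyc_ascent_to B j \<longrightarrow>
          cyc_ascent_from (fs_phi' j B) j = (\<not> cyc_ascent_from B j)
          \<and> cyc_ascent_to (fs_phi' j B) j = (\<not> cyc_ascent_to B j))"
    using assms
  proof (cases rule: fs_phi'_max_first_block_cases)
    case (hop b1 w b4)
    let ?L = "b1 @ j # w @ b4" and ?L' = "b1 @ w @ j # b4"
    have "mset ?L' = mset ?L" by simp
    then have dL: "distinct ?L" using assms(2) hop(2) by (metis mset_eq_imp_distinct_iff)
    show ?thesis using hop(2) cyc_ascents_hop_letter[OF dL hop(1)]
      cyc_ascents_hop_other[OF dL hop(1)] by auto
  qed simp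
  then show "\<And>y. y \<in> set B \<Longrightarrow> y \<noteq> j \<Longrightarrow> cyc_ascent_from (fs_phi' j B) y = cyc_ascent_from B y
          \<and> cyc_ascent_to (fs_phi' j B) y = cyc_ascent_to B y"
    and "cyc_ascent_from B j \<noteq> cyc_ascent_to B j \<Longrightarrow> fs_phi' j B = B"
    and "cyc_ascent_from B j = cyc_ascent_to B j \<Longrightarrow>
          cyc_ascent_from (fs_phi' j B) j = (\<not> cyc_ascent_from B j)
          \<and> cyc_ascent_to (fs_phi' j B) j = (\<not> cyc_ascent_to B j)"
    by blast+
qed

lemma fs_phi'_append_block:
  assumes d: "distinct (pre @ B @ post)" and g: "max_first B" and len: "2 \<le> length B"
    and j: "j \<in> set B" and pre: "\<forall>y\<in>set pre. y < hd B" and post: "post \<noteq> [] \<longrightarrow> hd B < hd post"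
  shows "fs_phi' j (pre @ B @ post) = pre @ fs_phi' j B @ post"
proof (cases "j = hd B")
  case True
  then obtain t where B: "B = j # t" and t: "t \<noteq> []" "\<forall>y\<in>set t. y < j"
    using g len by (cases B) (auto simp: max_first_def Suc_le_length_iff)
  have "fs_factorization j [] pre t post" "fs_factorization j [] [] t []"
    using t pre post B by (auto simp: fs_factorization_def)
  then show ?thesis
    using fs_phi'_factorization[of "[]" pre j t post] fs_phi'_factorization[of "[]" "[]" j t "[]"]
      d B t by simp
next
  case False
  then obtain b1 w2 w3 b4 where B: "B = b1 @ w2 @ j # w3 @ b4" and f: "fs_factorization j b1 w2 w3 b4"
    and b1: "b1 \<noteq> []" "j < hd b1" and b4: "b4 \<noteq> [] \<longrightarrow> j < hd b4"
    using max_first_factorization[OF g _ j] d by (metis distinct_append)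
  have "fs_factorization j (pre @ b1) w2 w3 (b4 @ post)"
    using f b1 b4 post B by (cases b4) (auto simp: fs_factorization_def)
  then have "fs_phi' j ((pre @ b1) @ w2 @ j # w3 @ b4 @ post)
      = (if w2 \<noteq> [] \<and> w3 \<noteq> [] then (pre @ b1) @ w2 @ j # w3 @ b4 @ post
         else (pre @ b1) @ w3 @ j # w2 @ b4 @ post)"
    using fs_phi'_factorization[of "pre @ b1" w2 j w3 "b4 @ post"] d B b1 by simp
  moreover have "distinct B" using d by simp
  then have "fs_phi' j B = (if w2 \<noteq> [] \<and> w3 \<noteq> [] then B else b1 @ w3 @ j # w2 @ b4)"
    using fs_phi'_factorization[OF _ f] B b1 by simp
  ultimately show ?thesis using B by simp
qed

lemma canonical_blocks_before:
  assumes g: "canonical_blocks Bs" and k: "k < length Bs" and y: "y \<in> set (concat (take k Bs))"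
  shows "y < hd (Bs ! k)"
proof -
  obtain C where C: "C \<in> set (take k Bs)" "y \<in> set C" using y by auto
  then obtain i where "i < length (take k Bs)" "take k Bs ! i = C" by (metis in_set_conv_nth)
  then have i: "i < k" "y \<in> set (Bs ! i)" using C(2) by auto
  then have "Bs ! i \<in> set Bs" using k by simp
  then have "y \<le> hd (Bs ! i)" using Max_canonical_block[OF g] i(2) by (metis List.finite_set Max_ge)
  also have "hd (Bs ! i) < hd (Bs ! k)"
    using g i(1) k sorted_wrt_nth_less[of "(<)" "map hd Bs" i k] by (simp add: canonical_blocks_def)
  finally show ?thesis .
qed

lemma canonical_blocks_after:
  assumes g: "canonical_blocks Bs" and ne: "concat (drop (Suc k) Bs) \<noteq> []"
  shows "hd (Bs ! k) < hd (concat (drop (Suc k) Bs))"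
proof -
  have sk: "Suc k < length Bs" using ne by (metis drop_all concat.simps(1) not_le)
  then have "drop (Suc k) Bs = Bs ! Suc k # drop (Suc (Suc k)) Bs" by (simp add: Cons_nth_drop_Suc)
  moreover have "Bs ! Suc k \<noteq> []" using canonical_blocks_nonempty[OF g] sk by simp
  moreover have "hd (Bs ! k) < hd (Bs ! Suc k)"
    using g sk sorted_wrt_nth_less[of "(<)" "map hd Bs" k "Suc k"] by (simp add: canonical_blocks_def)
  ultimately show ?thesis by simp
qed

lemma fs_phi'_concat_canonical_blocks:
  assumes g: "canonical_blocks Bs" and d: "distinct (concat Bs)" and k: "k < length Bs"
    and len: "2 \<le> length (Bs ! k)" and j: "j \<in> set (Bs ! k)"
  shows "fs_phi' j (concat Bs) = concat (Bs[k := fs_phi' j (Bs ! k)])"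
proof -
  have split: "concat (Bs[k := B]) = concat (take k Bs) @ B @ concat (drop (Suc k) Bs)" for B
    using k by (simp add: upd_conv_take_nth_drop)
  have "max_first (Bs ! k)" using g k by (simp add: canonical_blocks_def)
  moreover have "distinct (concat (take k Bs) @ Bs ! k @ concat (drop (Suc k) Bs))"
    using d split[of "Bs ! k"] by simp
  ultimately show ?thesis
    using split[of "Bs ! k"] split[of "fs_phi' j (Bs ! k)"] fs_phi'_append_block len j
      canonical_blocks_before[OF g k] canonical_blocks_after[OF g] by simp
qed

lemma canonical_blocks_update:
  assumes g: "canonical_blocks Bs" and d: "distinct (concat Bs)" and k: "k < length Bs"
    and B': "max_first B'" "hd B' = hd (Bs ! k)" "mset B' = mset (Bs ! k)"
  shows "canonical_blocks (Bs[k := B'])" "mset (concat (Bs[k := B'])) = mset (concat Bs)"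
    and "distinct (concat (Bs[k := B']))" "set (concat (Bs[k := B'])) = set (concat Bs)"
proof -
  have "map hd (Bs[k := B']) = map hd Bs" using k B'(2) by (metis list_update_id map_update nth_map)
  moreover have "set (Bs[k := B']) \<subseteq> insert B' (set Bs)" by (rule set_update_subset_insert)
  ultimately show "canonical_blocks (Bs[k := B'])" using g B'(1) by (auto simp: canonical_blocks_def)
  have "concat Bs = concat (take k Bs) @ Bs ! k @ concat (drop (Suc k) Bs)"
    using k by (metis concat.simps(2) concat_append id_take_nth_drop)
  then show m: "mset (concat (Bs[k := B'])) = mset (concat Bs)"
    using k B'(3) by (simp add: upd_conv_take_nth_drop)
  show "distinct (concat (Bs[k := B']))" using d m by (metis mset_eq_imp_distinct_iff)
  show "set (concat (Bs[k := B'])) = set (concat Bs)" using m by (metis mset_eq_setD)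
qed

section \<open>The involutions \<open>tau_c n j\<close> on derangements\<close>

lemma in_set_concat_nthE:
  assumes "y \<in> set (concat xss)"
  obtains k where "k < length xss" "y \<in> set (xss ! k)"
  using assms by (metis UN_E in_set_conv_nth set_concat)

lemma perm_of_blocks_update_other_block:
  assumes d: "distinct (concat Bs)" and d': "distinct (concat (Bs[k := B']))"
    and i: "i < length Bs" "i \<noteq> k" and y: "y \<in> set (Bs ! i)"
  shows "(inv (perm_of_blocks (Bs[k := B'])) y < y \<longleftrightarrow> inv (perm_of_blocks Bs) y < y)
    \<and> (y < perm_of_blocks (Bs[k := B']) y \<longleftrightarrow> y < perm_of_blocks Bs y)"
proof -
  have "Bs ! i \<in> set (Bs[k := B'])" "Bs ! i \<in> set Bs"
    using i by (metis length_list_update nth_list_update_neq nth_mem)+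
  then show ?thesis using perm_of_blocks_stats[OF d _ y] perm_of_blocks_stats[OF d' _ y] by simp
qed

lemma tau_c_perm_of_blocks:
  assumes g: "canonical_blocks Bs" and d: "distinct (concat Bs)" and s: "set (concat Bs) = {1..n}"
    and k: "k < length Bs" and len: "2 \<le> length (Bs ! k)" and j: "j \<in> set (Bs ! k)"
  shows "tau_c n j (perm_of_blocks Bs) = perm_of_blocks (Bs[k := fs_phi' j (Bs ! k)])"
proof -
  have "max_first (Bs ! k)" "distinct (Bs ! k)"
    using g d k by (auto simp: canonical_blocks_def distinct_concat_iff)
  note B' = fs_phi'_max_first_block[OF this len j]
  have "perm_of_blocks Bs permutes {1..n}" using perm_of_blocks_permutes[OF d] s by simp
  moreover have "j \<in> {1..n}" using j k s by (metis UN_I nth_mem set_concat)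
  ultimately have "tau_c n j (perm_of_blocks Bs) = perm_of_word (fs_phi' j (concat Bs))"
    using tau_c_eq_perm_of_word iota_perm_of_blocks[OF g d s] by simp
  also have "\<dots> = perm_of_blocks (Bs[k := fs_phi' j (Bs ! k)])"
    using fs_phi'_concat_canonical_blocks[OF g d k len j]
      ltr_blocks_concat[OF canonical_blocks_update(1)[OF g d k B'(1-3)]]
    unfolding perm_of_word_def by simp
  finally show ?thesis .
qed

lemma fs_phi'_canonical_blocks_update:
  assumes g: "canonical_blocks Bs" and d: "distinct (concat Bs)" and s: "set (concat Bs) = {1..n}"
    and k: "k < length Bs" and len: "2 \<le> length (Bs ! k)" and j: "j \<in> set (Bs ! k)"
  defines "Bs' \<equiv> Bs[k := fs_phi' j (Bs ! k)]"
  shows "canonical_blocks Bs'" "distinct (concat Bs')" "set (concat Bs') = {1..n}"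
    and "k < length Bs'" "2 \<le> length (Bs' ! k)" "j \<in> set (Bs' ! k)"
    and "Bs'[k := fs_phi' j (Bs' ! k)] = Bs"
proof -
  have "max_first (Bs ! k)" "distinct (Bs ! k)"
    using g d k by (auto simp: canonical_blocks_def distinct_concat_iff)
  note B' = fs_phi'_max_first_block[OF this len j]
  note upd = canonical_blocks_update[OF g d k B'(1-3), folded Bs'_def]
  show "canonical_blocks Bs'" "distinct (concat Bs')" "set (concat Bs') = {1..n}"
    using upd s by simp_all
  show "k < length Bs'" "Bs'[k := fs_phi' j (Bs' ! k)] = Bs"
    using k B'(4) unfolding Bs'_def by simp_all
  have "length (fs_phi' j (Bs ! k)) = length (Bs ! k)" "set (fs_phi' j (Bs ! k)) = set (Bs ! k)"
    using mset_eq_length[OF B'(3)] mset_eq_setD[OF B'(3)] .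
  then show "2 \<le> length (Bs' ! k)" "j \<in> set (Bs' ! k)" using k len j unfolding Bs'_def by simp_all
qed

lemma derangement_blocks_at:
  assumes \<sigma>: "\<sigma> \<in> derangements n" and j: "j \<in> {1..n}"
  obtains Bs k where "canonical_blocks Bs" "distinct (concat Bs)" "set (concat Bs) = {1..n}"
    "\<sigma> = perm_of_blocks Bs" "k < length Bs" "2 \<le> length (Bs ! k)" "j \<in> set (Bs ! k)"
proof -
  note blocks = derangement_blocks[OF \<sigma>]
  have "j \<in> set (concat (ltr_blocks (iota n \<sigma>)))" using blocks(3) j by simp
  then obtain k where k: "k < length (ltr_blocks (iota n \<sigma>))" "j \<in> set (ltr_blocks (iota n \<sigma>) ! k)"
    by (rule in_set_concat_nthE)
  show ?thesis using that[OF blocks(1-4) k(1) blocks(5)[OF nth_mem[OF k(1)]] k(2)] .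
qed

lemma tau_c_derangement_involutive:
  assumes "\<sigma> \<in> derangements n" "j \<in> {1..n}"
  shows "tau_c n j (tau_c n j \<sigma>) = \<sigma>" and "cyc n (tau_c n j \<sigma>) = cyc n \<sigma>"
proof -
  obtain Bs k where g: "canonical_blocks Bs" and d: "distinct (concat Bs)"
    and s: "set (concat Bs) = {1..n}" and \<sigma>: "\<sigma> = perm_of_blocks Bs"
    and k: "k < length Bs" "2 \<le> length (Bs ! k)" "j \<in> set (Bs ! k)"
    using derangement_blocks_at[OF assms] by blast
  note upd = fs_phi'_canonical_blocks_update[OF g d s k]
  have \<sigma>': "tau_c n j \<sigma> = perm_of_blocks (Bs[k := fs_phi' j (Bs ! k)])"
    using tau_c_perm_of_blocks[OF g d s k] \<sigma> by simp
  show "tau_c n j (tau_c n j \<sigma>) = \<sigma>" using tau_c_perm_of_blocks[OF upd(1-6)] upd(7) \<sigma>' \<sigma> by simp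
  show "cyc n (tau_c n j \<sigma>) = cyc n \<sigma>"
    using cyc_perm_of_blocks[OF upd(1-3)] cyc_perm_of_blocks[OF g d s] \<sigma>' \<sigma> by simp
qed

lemma tau_c_derangement_letters:
  assumes "\<sigma> \<in> derangements n" "j \<in> {1..n}"
  defines "\<sigma>' \<equiv> tau_c n j \<sigma>"
  shows "\<And>y. y \<in> {1..n} \<Longrightarrow> y \<noteq> j \<Longrightarrow> (inv \<sigma>' y < y \<longleftrightarrow> inv \<sigma> y < y) \<and> (y < \<sigma>' y \<longleftrightarrow> y < \<sigma> y)"
    and "(inv \<sigma> j < j) \<noteq> (j < \<sigma> j) \<Longrightarrow> \<sigma>' = \<sigma>"
    and "(inv \<sigma> j < j) = (j < \<sigma> j) \<Longrightarrow> (inv \<sigma>' j < j \<longleftrightarrow> \<not> inv \<sigma> j < j) \<and> (j < \<sigma>' j \<longleftrightarrow> \<not> j < \<sigma> j)"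
proof -
  obtain Bs k where g: "canonical_blocks Bs" and d: "distinct (concat Bs)"
    and s: "set (concat Bs) = {1..n}" and \<sigma>: "\<sigma> = perm_of_blocks Bs"
    and k: "k < length Bs" "2 \<le> length (Bs ! k)" "j \<in> set (Bs ! k)"
    using derangement_blocks_at[OF assms(1,2)] by blast
  define B where "B = Bs ! k"
  define Bs' where "Bs' = Bs[k := fs_phi' j B]"
  note upd = fs_phi'_canonical_blocks_update[OF g d s k, folded B_def, folded Bs'_def]
  have B: "max_first B" "distinct B" "2 \<le> length B" "j \<in> set B" "B \<in> set Bs"
    using g d k unfolding B_def by (auto simp: canonical_blocks_def distinct_concat_iff)
  have \<sigma>': "\<sigma>' = perm_of_blocks Bs'"
    using tau_c_perm_of_blocks[OF g d s k] \<sigma> unfolding \<sigma>'_def Bs'_def B_def by simp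
  have stats: "(y < \<sigma> y \<longleftrightarrow> cyc_ascent_from B y) \<and> (inv \<sigma> y < y \<longleftrightarrow> cyc_ascent_to B y)
      \<and> (y < \<sigma>' y \<longleftrightarrow> cyc_ascent_from (fs_phi' j B) y) \<and> (inv \<sigma>' y < y \<longleftrightarrow> cyc_ascent_to (fs_phi' j B) y)"
    if "y \<in> set B" for y
  proof -
    have "fs_phi' j B \<in> set Bs'" using k(1) unfolding Bs'_def by (rule set_update_memI)
    moreover have "y \<in> set (fs_phi' j B)"
      using that mset_eq_setD[OF fs_phi'_max_first_block(3)[OF B(1-4)]] by simp
    ultimately show ?thesis
      using perm_of_blocks_stats[OF d B(5) that] perm_of_blocks_stats[OF upd(2)] \<sigma> \<sigma>' by simp
  qed
  show "(inv \<sigma>' y < y \<longleftrightarrow> inv \<sigma> y < y) \<and> (y < \<sigma>' y \<longleftrightarrow> y < \<sigma> y)" if "y \<in> {1..n}" "y \<noteq> j" for y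
  proof -
    have "y \<in> set (concat Bs)" using that s by simp
    then obtain i where i: "i < length Bs" "y \<in> set (Bs ! i)" by (rule in_set_concat_nthE)
    show ?thesis
    proof (cases "i = k")
      case True
      then show ?thesis using stats cyc_ascents_fs_phi'_block(1)[OF B(1-4)] i(2) that(2) B_def by simp
    next
      case False
      then show ?thesis
        using perm_of_blocks_update_other_block[OF d upd(2)[unfolded Bs'_def] i(1) _ i(2)] \<sigma> \<sigma>'
        unfolding Bs'_def by simp
    qed
  qed
  show "\<sigma>' = \<sigma>" if "(inv \<sigma> j < j) \<noteq> (j < \<sigma> j)"
  proof -
    have "fs_phi' j B = B" using that stats[OF B(4)] cyc_ascents_fs_phi'_block(2)[OF B(1-4)] by blast
    then show ?thesis using \<sigma> \<sigma>' unfolding Bs'_def B_def by simp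
  qed
  show "(inv \<sigma> j < j) = (j < \<sigma> j) \<Longrightarrow> (inv \<sigma>' j < j \<longleftrightarrow> \<not> inv \<sigma> j < j) \<and> (j < \<sigma>' j \<longleftrightarrow> \<not> j < \<sigma> j)"
    using stats[OF B(4)] cyc_ascents_fs_phi'_block(3)[OF B(1-4)] by simp
qed

section \<open>Exchanging letter weights along involutions\<close>

lemma sum_involution_exchange:
  fixes H f g :: "'p \<Rightarrow> 'a::{idom, ring_char_0}"
  assumes "\<And>\<sigma>. \<sigma> \<in> P \<Longrightarrow> \<tau> \<sigma> \<in> P \<and> \<tau> (\<tau> \<sigma>) = \<sigma> \<and> H (\<tau> \<sigma>) = H \<sigma>"
    and "\<And>\<sigma>. \<sigma> \<in> P \<Longrightarrow> f \<sigma> + f (\<tau> \<sigma>) = g \<sigma> + g (\<tau> \<sigma>)"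
  shows "(\<Sum>\<sigma>\<in>P. H \<sigma> * f \<sigma>) = (\<Sum>\<sigma>\<in>P. H \<sigma> * g \<sigma>)"
proof -
  have reindex: "(\<Sum>\<sigma>\<in>P. H \<sigma> * F \<sigma>) = (\<Sum>\<sigma>\<in>P. H \<sigma> * F (\<tau> \<sigma>))" for F :: "'p \<Rightarrow> 'a"
    by (rule sum.reindex_bij_witness[of _ \<tau> \<tau>]) (use assms(1) in auto)
  have "2 * (\<Sum>\<sigma>\<in>P. H \<sigma> * f \<sigma>) = (\<Sum>\<sigma>\<in>P. H \<sigma> * (f \<sigma> + f (\<tau> \<sigma>)))"
    using reindex[of f] by (simp add: sum.distrib distrib_left)
  also have "\<dots> = (\<Sum>\<sigma>\<in>P. H \<sigma> * (g \<sigma> + g (\<tau> \<sigma>)))" using assms(2) by simp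
  also have "\<dots> = 2 * (\<Sum>\<sigma>\<in>P. H \<sigma> * g \<sigma>)"
    using reindex[of g] by (simp add: sum.distrib distrib_left)
  finally show ?thesis by simp
qed

lemma sum_prod_exchange_involutions:
  fixes G :: "'p \<Rightarrow> 'a::{idom, ring_char_0}" and f g :: "'p \<Rightarrow> 'i \<Rightarrow> 'a"
  assumes I: "finite I"
    and \<tau>: "\<And>j \<sigma>. j \<in> I \<Longrightarrow> \<sigma> \<in> P \<Longrightarrow> \<tau> j \<sigma> \<in> P \<and> \<tau> j (\<tau> j \<sigma>) = \<sigma> \<and> G (\<tau> j \<sigma>) = G \<sigma>"
    and other: "\<And>j \<sigma> y. j \<in> I \<Longrightarrow> \<sigma> \<in> P \<Longrightarrow> y \<in> I \<Longrightarrow> y \<noteq> j \<Longrightarrow>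
        f (\<tau> j \<sigma>) y = f \<sigma> y \<and> g (\<tau> j \<sigma>) y = g \<sigma> y"
    and at: "\<And>j \<sigma>. j \<in> I \<Longrightarrow> \<sigma> \<in> P \<Longrightarrow> f \<sigma> j + f (\<tau> j \<sigma>) j = g \<sigma> j + g (\<tau> j \<sigma>) j"
  shows "(\<Sum>\<sigma>\<in>P. G \<sigma> * (\<Prod>y\<in>I. f \<sigma> y)) = (\<Sum>\<sigma>\<in>P. G \<sigma> * (\<Prod>y\<in>I. g \<sigma> y))"
proof -
  have "(\<Sum>\<sigma>\<in>P. G \<sigma> * (\<Prod>y\<in>I. f \<sigma> y))
      = (\<Sum>\<sigma>\<in>P. G \<sigma> * ((\<Prod>y\<in>I - J. f \<sigma> y) * (\<Prod>y\<in>J. g \<sigma> y)))" if "J \<subseteq> I" for J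
    using finite_subset[OF that I] that
  proof (induction J rule: finite_subset_induct')
    case (insert j J)
    define H where "H \<sigma> = G \<sigma> * (\<Prod>y\<in>I - insert j J. f \<sigma> y) * (\<Prod>y\<in>J. g \<sigma> y)" for \<sigma>
    have split: "(\<Prod>y\<in>I - J. F y) = F j * (\<Prod>y\<in>I - insert j J. F y)" for F :: "'i \<Rightarrow> 'a"
    proof -
      have e: "I - J = insert j (I - insert j J)" using insert.hyps by auto
      show ?thesis by (subst e) (rule prod.insert; use I in auto)
    qed
    have Hinv: "H (\<tau> j \<sigma>) = H \<sigma>" if "\<sigma> \<in> P" for \<sigma>
    proof -
      have "(\<Prod>y\<in>I - insert j J. f (\<tau> j \<sigma>) y) = (\<Prod>y\<in>I - insert j J. f \<sigma> y)"
        using other[OF insert.hyps(2) that] by (intro prod.cong) auto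
      moreover have "(\<Prod>y\<in>J. g (\<tau> j \<sigma>) y) = (\<Prod>y\<in>J. g \<sigma> y)"
        using other[OF insert.hyps(2) that] insert.hyps by (intro prod.cong) auto
      ultimately show ?thesis using \<tau>[OF insert.hyps(2) that] unfolding H_def by simp
    qed
    have exchange: "(\<Sum>\<sigma>\<in>P. H \<sigma> * f \<sigma> j) = (\<Sum>\<sigma>\<in>P. H \<sigma> * g \<sigma> j)"
      using Hinv \<tau>[OF insert.hyps(2)] at[OF insert.hyps(2)]
      by (intro sum_involution_exchange[where \<tau> = "\<tau> j"]) auto
    have "(\<Sum>\<sigma>\<in>P. G \<sigma> * (\<Prod>y\<in>I. f \<sigma> y)) = (\<Sum>\<sigma>\<in>P. H \<sigma> * f \<sigma> j)"
      unfolding insert.IH H_def split by (simp add: mult_ac)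
    also have "\<dots> = (\<Sum>\<sigma>\<in>P. H \<sigma> * g \<sigma> j)" by (rule exchange)
    also have "\<dots> = (\<Sum>\<sigma>\<in>P. G \<sigma> * ((\<Prod>y\<in>I - insert j J. f \<sigma> y) * (\<Prod>y\<in>insert j J. g \<sigma> y)))"
      unfolding H_def using insert.hyps by (simp add: mult_ac)
    finally show ?case .
  qed simp
  from this[OF subset_refl] show ?thesis by simp
qed

section \<open>Counting cyclic peaks and letter weights\<close>

text \<open>\<open>\<sigma>\<close> maps the cyclic descent tops \<open>{x. \<sigma> x < x}\<close> bijectively onto \<open>{x. x < inv \<sigma> x}\<close>;
  peaks and valleys are the two set differences.\<close>

lemma card_cyc_peaks_eq_card_cyc_valleys:
  fixes \<sigma> :: "'a::linorder \<Rightarrow> 'a"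
  assumes perm: "\<sigma> permutes S" and S: "finite S"
  shows "card {x\<in>S. inv \<sigma> x < x \<and> \<sigma> x < x} = card {x\<in>S. x < inv \<sigma> x \<and> x < \<sigma> x}"
proof -
  define D where "D = {x\<in>S. \<sigma> x < x}"
  define E where "E = {x\<in>S. x < inv \<sigma> x}"
  have inv: "\<sigma> (inv \<sigma> x) = x" "inv \<sigma> (\<sigma> x) = x" for x
    using permutes_inverses[OF perm] by simp_all
  have in_S: "\<sigma> x \<in> S \<longleftrightarrow> x \<in> S" "inv \<sigma> x \<in> S \<longleftrightarrow> x \<in> S" for x
    using permutes_in_image[OF perm] permutes_in_image[OF permutes_inv[OF perm]] by simp_all
  have image: "\<sigma> ` D = E"
  proof
    show "\<sigma> ` D \<subseteq> E" unfolding D_def E_def using inv in_S by auto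
    show "E \<subseteq> \<sigma> ` D"
    proof
      fix y assume "y \<in> E"
      then have "inv \<sigma> y \<in> D" unfolding D_def E_def using inv in_S by auto
      then show "y \<in> \<sigma> ` D" using inv(1)[of y] by (metis image_eqI)
    qed
  qed
  have "inj_on \<sigma> D" using permutes_inj[OF perm] inj_on_subset subset_UNIV by blast
  then have "card D = card E" using card_image image by fastforce
  moreover have "finite D" "finite E" unfolding D_def E_def using S by simp_all
  ultimately have card_diff: "card (D - E) = card (E - D)"
    by (metis Int_commute card_Diff_subset_Int finite_Int)
  have fixed: "inv \<sigma> x = x \<longleftrightarrow> \<sigma> x = x" for x by (metis inv)
  have "D - E = {x\<in>S. inv \<sigma> x < x \<and> \<sigma> x < x}" "E - D = {x\<in>S. x < inv \<sigma> x \<and> x < \<sigma> x}"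
    unfolding D_def E_def by (auto simp: not_less le_less fixed) (metis fixed less_irrefl)
  with card_diff show ?thesis by simp
qed

definition cpk_exc_letter_weight :: "real \<Rightarrow> real \<Rightarrow> real \<Rightarrow> (nat \<Rightarrow> nat) \<Rightarrow> nat \<Rightarrow> real" where
  "cpk_exc_letter_weight c T t \<sigma> y =
     (if inv \<sigma> y < y then (if y < \<sigma> y then c * T else 1) else (if y < \<sigma> y then t else c))"

lemma prod_if_eq_power_card:
  "finite S \<Longrightarrow> (\<Prod>y\<in>S. if P y then a else 1) = a ^ card {y\<in>S. P y}"
  using prod.inter_filter[of S "\<lambda>_. a" P] by simp

lemma card_filter_split:
  "finite S \<Longrightarrow> card {y\<in>S. Q y} = card {y\<in>S. P y \<and> Q y} + card {y\<in>S. \<not> P y \<and> Q y}"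
  by (subst card_Un_disjoint[symmetric]) (auto intro!: arg_cong[where f = card])

lemma card_eq_card_filter_add:
  "finite S \<Longrightarrow> card S = card {y\<in>S. P y} + card {y\<in>S. \<not> P y}"
  using card_filter_split[of S "\<lambda>_. True" P] by simp

lemma prod_cpk_exc_letter_weight:
  assumes \<sigma>: "\<sigma> \<in> derangements n" and cYT: "c * c * Y * T = t"
  shows "(\<Prod>y\<in>{1..n}. cpk_exc_letter_weight c T t \<sigma> y) = c ^ n * Y ^ cpk n \<sigma> * T ^ exc n \<sigma>"
proof -
  let ?S = "{1..n}"
  have perm: "\<sigma> permutes ?S" using \<sigma> by (rule derangement_permutes)
  have neq: "\<sigma> y \<noteq> y" "inv \<sigma> y \<noteq> y" if "y \<in> ?S" for y
    using \<sigma> that permutes_inverses(1)[OF perm, of y] by (auto simp: derangements_def)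
  define da where "da = card {y\<in>?S. inv \<sigma> y < y \<and> y < \<sigma> y}"
  define pk where "pk = card {y\<in>?S. inv \<sigma> y < y \<and> \<not> y < \<sigma> y}"
  define vl where "vl = card {y\<in>?S. \<not> inv \<sigma> y < y \<and> y < \<sigma> y}"
  define dd where "dd = card {y\<in>?S. \<not> inv \<sigma> y < y \<and> \<not> y < \<sigma> y}"
  have "y \<in> ?S \<and> inv \<sigma> y < y \<and> \<sigma> y < y \<longleftrightarrow> y \<in> ?S \<and> inv \<sigma> y < y \<and> \<not> y < \<sigma> y"
    and "y \<in> ?S \<and> y < inv \<sigma> y \<and> y < \<sigma> y \<longleftrightarrow> y \<in> ?S \<and> \<not> inv \<sigma> y < y \<and> y < \<sigma> y" for y
    using neq[of y] by auto
  then have "{y\<in>?S. inv \<sigma> y < y \<and> \<sigma> y < y} = {y\<in>?S. inv \<sigma> y < y \<and> \<not> y < \<sigma> y}"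
    and "{y\<in>?S. y < inv \<sigma> y \<and> y < \<sigma> y} = {y\<in>?S. \<not> inv \<sigma> y < y \<and> y < \<sigma> y}"
    by (simp_all only:)
  then have cpk: "cpk n \<sigma> = pk" and "vl = pk"
    using card_cyc_peaks_eq_card_cyc_valleys[OF perm]
    unfolding cpk_def pk_def vl_def by (simp_all add: conj_commute)
  have exc: "exc n \<sigma> = da + vl"
    unfolding exc_def da_def vl_def by (subst card_filter_split[where P = "\<lambda>y. inv \<sigma> y < y"]) simp_all
  have "n = card {y\<in>?S. y < \<sigma> y} + card {y\<in>?S. \<not> y < \<sigma> y}"
    using card_eq_card_filter_add[of ?S "\<lambda>y. y < \<sigma> y"] by simp
  also have "\<dots> = (da + vl) + (pk + dd)"
    unfolding da_def vl_def pk_def dd_def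
    by (subst (1 2) card_filter_split[where P = "\<lambda>y. inv \<sigma> y < y"]) simp_all
  finally have n: "n = da + vl + vl + dd" using \<open>vl = pk\<close> by simp
  have "(\<Prod>y\<in>?S. cpk_exc_letter_weight c T t \<sigma> y)
      = (\<Prod>y\<in>?S. (if inv \<sigma> y < y \<and> y < \<sigma> y then c * T else 1)
          * (if \<not> inv \<sigma> y < y \<and> y < \<sigma> y then t else 1)
          * (if \<not> inv \<sigma> y < y \<and> \<not> y < \<sigma> y then c else 1))"
    by (intro prod.cong) (auto simp: cpk_exc_letter_weight_def)
  also have "\<dots> = (c * T) ^ da * t ^ vl * c ^ dd"
    unfolding prod.distrib da_def vl_def dd_def by (simp add: prod_if_eq_power_card)
  also have "\<dots> = c ^ n * Y ^ vl * T ^ (da + vl)"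
    unfolding n cYT[symmetric] by (simp add: power_add power_mult_distrib mult_ac)
  finally show ?thesis using exc cpk \<open>vl = pk\<close> by simp
qed

lemma A_cyc_exc_eq_P_cyc_cpk_exc:
  fixes c T Y t w :: real
  assumes P: "Pset \<subseteq> derangements n"
    and closed: "\<And>\<sigma> j. \<sigma> \<in> Pset \<Longrightarrow> j \<in> {1..n} \<Longrightarrow> tau_c n j \<sigma> \<in> Pset"
    and cT: "c * T = 1 + t - c" and cYT: "c * c * Y * T = t"
  shows "A_cyc_exc n Pset w t = c ^ n * P_cyc_cpk_exc n Pset w Y T"
proof -
  define f where "f \<sigma> y = (if y < \<sigma> y then t else 1)" for \<sigma> :: "nat \<Rightarrow> nat" and y
  define g where "g = cpk_exc_letter_weight c T t"
  have der: "\<sigma> \<in> derangements n" if "\<sigma> \<in> Pset" for \<sigma> using P that by blast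
  have "(\<Sum>\<sigma>\<in>Pset. w ^ cyc n \<sigma> * (\<Prod>y\<in>{1..n}. f \<sigma> y))
      = (\<Sum>\<sigma>\<in>Pset. w ^ cyc n \<sigma> * (\<Prod>y\<in>{1..n}. g \<sigma> y))"
  proof (rule sum_prod_exchange_involutions[where \<tau> = "tau_c n"])
    fix j \<sigma> assume j: "j \<in> {1..n}" and \<sigma>: "\<sigma> \<in> Pset"
    note act = tau_c_derangement_letters[OF der[OF \<sigma>] j]
    show "tau_c n j \<sigma> \<in> Pset \<and> tau_c n j (tau_c n j \<sigma>) = \<sigma>
        \<and> w ^ cyc n (tau_c n j \<sigma>) = w ^ cyc n \<sigma>"
      using closed[OF \<sigma> j] tau_c_derangement_involutive[OF der[OF \<sigma>] j] by simp
    show "f (tau_c n j \<sigma>) y = f \<sigma> y \<and> g (tau_c n j \<sigma>) y = g \<sigma> y" if "y \<in> {1..n}" "y \<noteq> j" for y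
      using act(1)[OF that] unfolding f_def g_def cpk_exc_letter_weight_def by simp
    show "f \<sigma> j + f (tau_c n j \<sigma>) j = g \<sigma> j + g (tau_c n j \<sigma>) j"
    proof (cases "(inv \<sigma> j < j) = (j < \<sigma> j)")
      case True
      then show ?thesis using act(3) cT unfolding f_def g_def cpk_exc_letter_weight_def by auto
    next
      case False
      then show ?thesis using act(2) unfolding f_def g_def cpk_exc_letter_weight_def by auto
    qed
  qed simp
  moreover have "(\<Prod>y\<in>{1..n}. f \<sigma> y) = t ^ exc n \<sigma>" for \<sigma>
    unfolding f_def exc_def by (simp add: prod_if_eq_power_card)
  moreover have "(\<Prod>y\<in>{1..n}. g \<sigma> y) = c ^ n * Y ^ cpk n \<sigma> * T ^ exc n \<sigma>" if "\<sigma> \<in> Pset" for \<sigma>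
    unfolding g_def using prod_cpk_exc_letter_weight[OF der[OF that] cYT] .
  ultimately show ?thesis
    unfolding A_cyc_exc_def P_cyc_cpk_exc_def sum_distrib_left by (simp add: mult_ac)
qed

lemma P_cyc_cpk_exc_eq_A_cyc_exc:
  fixes u v x t w :: real
  assumes P: "Pset \<subseteq> derangements n"
    and closed: "\<And>\<sigma> j. \<sigma> \<in> Pset \<Longrightarrow> j \<in> {1..n} \<Longrightarrow> tau_c n j \<sigma> \<in> Pset"
    and uv: "u + v = t * (1 + u * v)" "(1 + u)^2 * v = x * t * (1 + u * v)^2"
    and nz: "1 + u \<noteq> 0" "1 + u * v \<noteq> 0"
  shows "P_cyc_cpk_exc n Pset w x t = ((1 + u) / (1 + u * v)) ^ n * A_cyc_exc n Pset w v"
proof -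
  define c where "c = (1 + u * v) / (1 + u)"
  have ct: "c * t = 1 + v - c"
    unfolding c_def using uv(1) nz by (simp add: field_simps)
  have "c * c * x * t = ((1 + u)^2 * v) / (1 + u)^2"
    unfolding c_def uv(2) by (simp add: power2_eq_square)
  also have "\<dots> = v" using nz by simp
  finally have "A_cyc_exc n Pset w v = c ^ n * P_cyc_cpk_exc n Pset w x t"
    using A_cyc_exc_eq_P_cyc_cpk_exc[OF P closed ct] by simp
  moreover have "((1 + u) / (1 + u * v)) ^ n * c ^ n = 1"
    unfolding c_def using nz by (simp add: power_mult_distrib[symmetric])
  ultimately show ?thesis by (metis mult.assoc mult_1)
qed

lemma xt_substitution:
  fixes x t :: real
  assumes "x + t \<noteq> 0" "1 + x * t \<noteq> 0" "1 + x \<noteq> 0"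
  defines "c \<equiv> (1 + x * t) / (1 + x)" and "T \<equiv> (x + t) / (1 + x * t)"
    and "Y \<equiv> (1 + x)^2 * t / ((x + t) * (1 + x * t))"
  shows "c * T = 1 + t - c" and "c * c * Y * T = t"
proof -
  have cT: "c * T = (x + t) / (1 + x)" unfolding c_def T_def using assms(2) by simp
  also have "\<dots> = 1 + t - c" unfolding c_def using assms(3) by (simp add: field_simps)
  finally show "c * T = 1 + t - c" .
  have "c * Y = ((1 + x * t) * ((1 + x) * t)) / ((1 + x * t) * (x + t))"
    unfolding c_def Y_def using assms(3) by (simp add: power2_eq_square mult_ac)
  also have "\<dots> = (1 + x) * t / (x + t)" using assms(2) by (rule mult_divide_mult_cancel_left)
  finally have "c * Y = (1 + x) * t / (x + t)" .
  then have "c * c * Y * T = (x + t) / (1 + x) * ((1 + x) * t / (x + t))"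
    using cT by (metis mult.assoc mult.commute)
  then show "c * c * Y * T = t" using assms(1,3) by simp
qed

lemma uv_substitution:
  fixes x t s u v :: real
  assumes s: "s^2 = (1 + t)^2 - 4 * x * t" and x: "x \<noteq> 0" "x \<noteq> 1" and t: "t \<noteq> 0"
    and u: "u = (1 + t^2 - 2 * x * t - (1 - t) * s) / (2 * (1 - x) * t)"
    and v: "v = ((1 + t)^2 - 2 * x * t - (1 + t) * s) / (2 * x * t)"
  shows "u + v = t * (1 + u * v)" and "(1 + u)^2 * v = x * t * (1 + u * v)^2"
proof -
  define U where "U = u * (2 * (1 - x) * t)"
  define V where "V = v * (2 * x * t)"
  have U: "U = 1 + t^2 - 2 * x * t - (1 - t) * s" and V: "V = (1 + t)^2 - 2 * x * t - (1 + t) * s"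
    unfolding U_def V_def u v using x t by simp_all
  have "2 * (x * U + (1 - x) * V) = 4 * x * (1 - x) * t^2 + U * V"
    unfolding U V using s by algebra
  then have "(4 * x * (1 - x) * t) * ((u + v) - t * (1 + u * v)) = 0"
    unfolding U_def V_def by algebra
  then show "u + v = t * (1 + u * v)" using x t by simp
  have "2 * (2 * (1 - x) * t + U)^2 * V = (4 * x * (1 - x) * t^2 + U * V)^2"
    unfolding U V using s by algebra
  then have "(8 * (1 - x)^2 * t^2 * x * t) * ((1 + u)^2 * v - x * t * (1 + u * v)^2) = 0"
    unfolding U_def V_def by algebra
  then show "(1 + u)^2 * v = x * t * (1 + u * v)^2" using x t by simp
qed

theorem theorem4p2:
  fixes n :: nat and Pset :: "(nat \<Rightarrow> nat) set"
  assumes "n \<ge> 1"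
    and "Pset \<subseteq> derangements n"
    and "\<And>\<sigma> S. \<sigma> \<in> Pset \<Longrightarrow> S \<subseteq> {1..n} \<Longrightarrow> tau_c_set n S \<sigma> \<in> Pset"
  shows "(\<forall>w x t :: real. x + t \<noteq> 0 \<longrightarrow> 1 + x * t \<noteq> 0 \<longrightarrow> 1 + x \<noteq> 0 \<longrightarrow>
            A_cyc_exc n Pset w t =
            ((1 + x * t) / (1 + x)) ^ n *
            P_cyc_cpk_exc n Pset w ((1 + x)^2 * t / ((x + t) * (1 + x * t))) ((x + t) / (1 + x * t)))
       \<and> (\<forall>w x t :: real. x \<noteq> 0 \<longrightarrow> x \<noteq> 1 \<longrightarrow> t \<noteq> 0 \<longrightarrow> (1 + t)^2 - 4 * x * t \<ge> 0 \<longrightarrow>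
            (let s = sqrt ((1 + t)^2 - 4 * x * t);
                 u = (1 + t^2 - 2 * x * t - (1 - t) * s) / (2 * (1 - x) * t);
                 v = ((1 + t)^2 - 2 * x * t - (1 + t) * s) / (2 * x * t)
             in 1 + u \<noteq> 0 \<longrightarrow> 1 + u * v \<noteq> 0 \<longrightarrow> u + v \<noteq> 0 \<longrightarrow>
                P_cyc_cpk_exc n Pset w x t = ((1 + u) / (1 + u * v)) ^ n * A_cyc_exc n Pset w v))"
proof -
  have closed: "tau_c n j \<sigma> \<in> Pset" if "\<sigma> \<in> Pset" "j \<in> {1..n}" for \<sigma> j
    using assms(3)[OF that(1), of "{j}"] that(2) by (simp add: tau_c_set_def)
  show ?thesis
  proof (intro conjI allI impI)
    fix w x t :: real
    assume nz: "x + t \<noteq> 0" "1 + x * t \<noteq> 0" "1 + x \<noteq> 0"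
    show "A_cyc_exc n Pset w t = ((1 + x * t) / (1 + x)) ^ n *
        P_cyc_cpk_exc n Pset w ((1 + x)^2 * t / ((x + t) * (1 + x * t))) ((x + t) / (1 + x * t))"
      by (rule A_cyc_exc_eq_P_cyc_cpk_exc[OF assms(2) closed xt_substitution[OF nz]])
  next
    fix w x t :: real
    assume x: "x \<noteq> 0" "x \<noteq> 1" and t: "t \<noteq> 0" and D: "(1 + t)^2 - 4 * x * t \<ge> 0"
    define s where "s = sqrt ((1 + t)^2 - 4 * x * t)"
    define u where "u = (1 + t^2 - 2 * x * t - (1 - t) * s) / (2 * (1 - x) * t)"
    define v where "v = ((1 + t)^2 - 2 * x * t - (1 + t) * s) / (2 * x * t)"
    have "s^2 = (1 + t)^2 - 4 * x * t" unfolding s_def using D by simp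
    note uv = uv_substitution[OF this x t u_def v_def]
    show "let s = sqrt ((1 + t)^2 - 4 * x * t);
          u = (1 + t^2 - 2 * x * t - (1 - t) * s) / (2 * (1 - x) * t);
          v = ((1 + t)^2 - 2 * x * t - (1 + t) * s) / (2 * x * t)
        in 1 + u \<noteq> 0 \<longrightarrow> 1 + u * v \<noteq> 0 \<longrightarrow> u + v \<noteq> 0 \<longrightarrow>
          P_cyc_cpk_exc n Pset w x t = ((1 + u) / (1 + u * v)) ^ n * A_cyc_exc n Pset w v"
      unfolding Let_def s_def[symmetric] u_def[symmetric] v_def[symmetric]
      using P_cyc_cpk_exc_eq_A_cyc_exc[OF assms(2) closed uv] by blast
  qed
qed

end
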